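(* Let $\Omega=(\mathscr{M},\langle\cdot,\cdot\rangle_{\mathscr{M}},\mathsf{D},\mathfrak{A},\mathsf{L})$ be a metrized quantum vector bundle of type $(F,G,H)$ for some admissible triple $(F,G,H)$. For every $r\ge0$, the $\mathfrak{A}$-weak topology and the norm topology of $\|\cdot\|_{\mathscr{M}}$ coincide on $\mathscr{D}_r(\Omega)$.
   Context: Notation: for a unital C*-algebra $\mathfrak{A}$, $\mathfrak{sa}(\mathfrak{A})$ denotes the set of self-adjoint elements and $\mathscr{S}(\mathfrak{A})$ the state space; $\Re a=(a+a^* )/2$, $\Im a=(a-a^* )/(2i)$; the Jordan product is $a\circ b=(ab+ba)/2$ and the Lie product is $\{a,b\}=(ab-ba)/(2i)$. Convention: a seminorm $\mathsf{L}$ defined on a subspace $\mathrm{dom}(\mathsf{L})$ is extended by $\mathsf{L}(x)=\infty$ outside $\mathrm{dom}(\mathsf{L})$, with $0\cdot\infty=0$ and $\infty+r=\infty$. A function $F:[0,\infty)^4\to[0,\infty)$ is admissible if it is nondecreasing for the product order and $x_1x_3+x_2x_4\le F(x_1,x_2,x_3,x_4)$. An $F$-quasi-Leibniz quantum compact metric space $(\mathfrak{A},\mathsf{L})$ is a unital C*-algebra $\mathfrak{A}$ with a seminorm $\mathsf{L}$ on a dense subspace $\mathrm{dom}(\mathsf{L})\subseteq\mathfrak{sa}(\mathfrak{A})$ closed under $\circ$ and $\{\cdot,\cdot\}$, such that: (i) $\{a\in\mathrm{dom}(\mathsf{L}):\mathsf{L}(a)=0\}=\mathbb{R}1_{\mathfrak{A}}$;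 (ii) $\mathrm{mk}_{\mathsf{L}}(\varphi,\psi)=\sup\{|\varphi(a)-\psi(a)|:a\in\mathfrak{sa}(\mathfrak{A}),\mathsf{L}(a)\le1\}$ metrizes the weak* topology on $\mathscr{S}(\mathfrak{A})$; (iii) $\{a:\mathsf{L}(a)\le1\}$ is norm closed; (iv) $\max\{\mathsf{L}(a\circ b),\mathsf{L}(\{a,b\})\}\le F(\|a\|,\|b\|,\mathsf{L}(a),\mathsf{L}(b))$ for $a,b\in\mathrm{dom}(\mathsf{L})$. A triple $(F,G,H)$ is admissible if $F$ is admissible, $G:[0,\infty)^3\to[0,\infty)$ is nondecreasing in each variable with $(x+y)z\le G(x,y,z)$, and $H:[0,\infty)^2\to[0,\infty)$ is nondecreasing in each variable with $2xy\le H(x,y)$. A left Hilbert $\mathfrak{A}$-module $(\mathscr{M},\langle\cdot,\cdot\rangle_{\mathscr{M}})$ is a left $\mathfrak{A}$-module with a map $\langle\cdot,\cdot\rangle_{\mathscr{M}}:\mathscr{M}\times\mathscr{M}\to\mathfrak{A}$, linear in the first and conjugate-linear in the second variable, with $\langle a\omega,\eta\rangle=a\langle\omega,\eta\rangle$, $\langle\omega,\eta\rangle^*=\langle\eta,\omega\rangle$, $\langle\omega,\omega\rangle\ge0$ with equality only for $\omega=0$, and complete for $\|\omega\|_{\mathscr{M}}=\|\langle\omega,\omega\rangle_{\mathscr{M}}\|_{\mathfrak{A}}^{1/2}$. A metrized quantum vector bundle of type $(F,G,H)$ is a tuple $\Omega=(\mathscr{M},\langle\cdot,\cdot\rangle_{\mathscr{M}},\mathsf{D},\mathfrak{A},\mathsf{L})$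 where $(\mathfrak{A},\mathsf{L})$ is an $F$-quasi-Leibniz quantum compact metric space (the base space), $(\mathscr{M},\langle\cdot,\cdot\rangle_{\mathscr{M}})$ is a left Hilbert $\mathfrak{A}$-module, and $\mathsf{D}$ (the D-norm) is a norm on a dense complex subspace $\mathrm{dom}(\mathsf{D})$ of $\mathscr{M}$ (extended by $\infty$) such that: (1) $\|\omega\|_{\mathscr{M}}\le\mathsf{D}(\omega)$; (2) $\{\omega:\mathsf{D}(\omega)\le1\}$ is compact for $\|\cdot\|_{\mathscr{M}}$; (3) $\mathsf{D}(a\omega)\le G(\|a\|_{\mathfrak{A}},\mathsf{L}(a),\mathsf{D}(\omega))$ for $a\in\mathfrak{sa}(\mathfrak{A})$, $\omega\in\mathscr{M}$; (4) $\max\{\mathsf{L}(\Re\langle\omega,\eta\rangle_{\mathscr{M}}),\mathsf{L}(\Im\langle\omega,\eta\rangle_{\mathscr{M}})\}\le H(\mathsf{D}(\omega),\mathsf{D}(\eta))$ for all $\omega,\eta\in\mathscr{M}$. For $r\ge0$, $\mathscr{D}_r(\Omega)=\{\omega\in\mathscr{M}:\mathsf{D}(\omega)\le r\}$. The $\mathfrak{A}$-weak topology on $\mathscr{M}$ is the weakest topology making all maps $\omega\mapsto\langle\omega,\eta\rangle_{\mathscr{M}}$ ($\eta\in\mathscr{M}$) continuous into $(\mathfrak{A},\|\cdot\|_{\mathfrak{A}})$. *)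

theory Defs
  imports "HOL-Analysis.Analysis"
begin

class cstar_unital = real_normed_algebra_1 + banach +
  fixes cs_scale :: "complex \<Rightarrow> 'a \<Rightarrow> 'a"
    and cs_star :: "'a \<Rightarrow> 'a"
  assumes cs_scale_add_right: "cs_scale c (x + y) = cs_scale c x + cs_scale c y"
    and cs_scale_add_left: "cs_scale (c + d) x = cs_scale c x + cs_scale d x"
    and cs_scale_scale: "cs_scale c (cs_scale d x) = cs_scale (c * d) x"
    and cs_scale_of_real: "cs_scale (complex_of_real r) x = r *\<^sub>R x"
    and cs_scale_mult_left: "cs_scale c x * y = cs_scale c (x * y)"
    and cs_scale_mult_right: "x * cs_scale c y = cs_scale c (x * y)"
    and norm_cs_scale: "norm (cs_scale c x) = cmod c * norm x"
    and cs_star_star: "cs_star (cs_star x) = x"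
    and cs_star_add: "cs_star (x + y) = cs_star x + cs_star y"
    and cs_star_scale: "cs_star (cs_scale c x) = cs_scale (cnj c) (cs_star x)"
    and cs_star_mult: "cs_star (x * y) = cs_star y * cs_star x"
    and cstar_identity: "norm (cs_star x * x) = (norm x)\<^sup>2"

definition sa :: "'a::cstar_unital \<Rightarrow> bool" where
  "sa a \<longleftrightarrow> cs_star a = a"

definition ReA :: "'a::cstar_unital \<Rightarrow> 'a" where
  "ReA a = (1/2) *\<^sub>R (a + cs_star a)"

definition ImA :: "'a::cstar_unital \<Rightarrow> 'a" where
  "ImA a = cs_scale (1 / (2 * \<i>)) (a - cs_star a)"

definition jordan :: "'a::cstar_unital \<Rightarrow> 'a \<Rightarrow> 'a" where
  "jordan a b = (1/2) *\<^sub>R (a * b + b * a)"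

definition lie :: "'a::cstar_unital \<Rightarrow> 'a \<Rightarrow> 'a" where
  "lie a b = cs_scale (1 / (2 * \<i>)) (a * b - b * a)"

definition positive :: "'a::cstar_unital \<Rightarrow> bool" where
  "positive a \<longleftrightarrow> (\<exists>b. a = cs_star b * b)"

definition is_state :: "('a::cstar_unital \<Rightarrow> complex) \<Rightarrow> bool" where
  "is_state \<phi> \<longleftrightarrow>
     (\<forall>x y. \<phi> (x + y) = \<phi> x + \<phi> y) \<and>
     (\<forall>c x. \<phi> (cs_scale c x) = c * \<phi> x) \<and>
     \<phi> 1 = 1 \<and>
     (\<forall>a. positive a \<longrightarrow> Im (\<phi> a) = 0 \<and> Re (\<phi> a) \<ge> 0)"

definition states :: "('a::cstar_unital \<Rightarrow> complex) set" where
  "states = {\<phi>. is_state \<phi>}"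

definition weak_star_top :: "('a::cstar_unital \<Rightarrow> complex) topology" where
  "weak_star_top = subtopology (product_topology (\<lambda>_. euclidean) UNIV) states"

text \<open>Seminorms extended by \<infinity> outside their domain are functions into ereal.\<close>
definition ldom :: "('b \<Rightarrow> ereal) \<Rightarrow> 'b set" where
  "ldom L = {a. L a \<noteq> \<infinity>}"

definition mk :: "('a::cstar_unital \<Rightarrow> ereal) \<Rightarrow> ('a \<Rightarrow> complex) \<Rightarrow> ('a \<Rightarrow> complex) \<Rightarrow> ereal" where
  "mk L \<phi> \<psi> = (SUP a\<in>{a. sa a \<and> L a \<le> 1}. ereal (cmod (\<phi> a - \<psi> a)))"

definition admissible_F :: "(real \<Rightarrow> real \<Rightarrow> real \<Rightarrow> real \<Rightarrow> real) \<Rightarrow> bool" where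
  "admissible_F F \<longleftrightarrow>
     (\<forall>x1 x2 x3 x4 y1 y2 y3 y4. 0 \<le> x1 \<and> 0 \<le> x2 \<and> 0 \<le> x3 \<and> 0 \<le> x4 \<and>
        x1 \<le> y1 \<and> x2 \<le> y2 \<and> x3 \<le> y3 \<and> x4 \<le> y4 \<longrightarrow> F x1 x2 x3 x4 \<le> F y1 y2 y3 y4) \<and>
     (\<forall>x1 x2 x3 x4. 0 \<le> x1 \<and> 0 \<le> x2 \<and> 0 \<le> x3 \<and> 0 \<le> x4 \<longrightarrow>
        0 \<le> F x1 x2 x3 x4 \<and> x1 * x3 + x2 * x4 \<le> F x1 x2 x3 x4)"

definition admissible_triple ::
  "(real \<Rightarrow> real \<Rightarrow> real \<Rightarrow> real \<Rightarrow> real) \<Rightarrow> (real \<Rightarrow> real \<Rightarrow> real \<Rightarrow> real) \<Rightarrow> (real \<Rightarrow> real \<Rightarrow> real) \<Rightarrow> bool" where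
  "admissible_triple F G H \<longleftrightarrow>
     admissible_F F \<and>
     (\<forall>x y z x' y' z'. 0 \<le> x \<and> 0 \<le> y \<and> 0 \<le> z \<and> x \<le> x' \<and> y \<le> y' \<and> z \<le> z' \<longrightarrow> G x y z \<le> G x' y' z') \<and>
     (\<forall>x y z. 0 \<le> x \<and> 0 \<le> y \<and> 0 \<le> z \<longrightarrow> 0 \<le> G x y z \<and> (x + y) * z \<le> G x y z) \<and>
     (\<forall>x y x' y'. 0 \<le> x \<and> 0 \<le> y \<and> x \<le> x' \<and> y \<le> y' \<longrightarrow> H x y \<le> H x' y') \<and>
     (\<forall>x y. 0 \<le> x \<and> 0 \<le> y \<longrightarrow> 0 \<le> H x y \<and> 2 * x * y \<le> H x y)"

definition qqcms :: "(real \<Rightarrow> real \<Rightarrow> real \<Rightarrow> real \<Rightarrow> real) \<Rightarrow> ('a::cstar_unital \<Rightarrow> ereal) \<Rightarrow> bool" where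
  "qqcms F L \<longleftrightarrow>
     \<comment> \<open>seminorm on a dense real subspace of sa(A)\<close>
     (\<forall>a. 0 \<le> L a) \<and>
     ldom L \<subseteq> {a. sa a} \<and> 0 \<in> ldom L \<and>
     (\<forall>a\<in>ldom L. \<forall>b\<in>ldom L. a + b \<in> ldom L \<and> L (a + b) \<le> L a + L b) \<and>
     (\<forall>a\<in>ldom L. \<forall>t::real. t *\<^sub>R a \<in> ldom L \<and> L (t *\<^sub>R a) = ereal \<bar>t\<bar> * L a) \<and>
     {a. sa a} \<subseteq> closure (ldom L) \<and>
     \<comment> \<open>closed under Jordan and Lie products\<close>
     (\<forall>a\<in>ldom L. \<forall>b\<in>ldom L. jordan a b \<in> ldom L \<and> lie a b \<in> ldom L) \<and>
     \<comment> \<open>(i)\<close>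
     {a\<in>ldom L. L a = 0} = range (\<lambda>r::real. r *\<^sub>R (1::'a)) \<and>
     \<comment> \<open>(ii) mk_L is a metric on the state space metrizing the weak* topology\<close>
     (\<forall>\<phi>\<in>states. \<forall>\<psi>\<in>states. mk L \<phi> \<psi> \<noteq> \<infinity>) \<and>
     Metric_space (states :: ('a \<Rightarrow> complex) set) (\<lambda>\<phi> \<psi>. real_of_ereal (mk L \<phi> \<psi>)) \<and>
     Metric_space.mtopology (states :: ('a \<Rightarrow> complex) set) (\<lambda>\<phi> \<psi>. real_of_ereal (mk L \<phi> \<psi>))
        = weak_star_top \<and>
     \<comment> \<open>(iii)\<close>
     closed {a. L a \<le> 1} \<and>
     \<comment> \<open>(iv) quasi-Leibniz inequality\<close>
     (\<forall>a\<in>ldom L. \<forall>b\<in>ldom L.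
        max (L (jordan a b)) (L (lie a b))
          \<le> ereal (F (norm a) (norm b) (real_of_ereal (L a)) (real_of_ereal (L b))))"

definition hnorm :: "('m \<Rightarrow> 'm \<Rightarrow> 'a::cstar_unital) \<Rightarrow> 'm \<Rightarrow> real" where
  "hnorm inn \<omega> = sqrt (norm (inn \<omega> \<omega>))"

definition norm_top :: "('m::ab_group_add \<Rightarrow> real) \<Rightarrow> 'm topology" where
  "norm_top N = topology (\<lambda>U. \<forall>x\<in>U. \<exists>e>0. \<forall>y. N (y - x) < e \<longrightarrow> y \<in> U)"

definition hilbert_left_module ::
  "(complex \<Rightarrow> 'm::ab_group_add \<Rightarrow> 'm) \<Rightarrow> ('a::cstar_unital \<Rightarrow> 'm \<Rightarrow> 'm) \<Rightarrow> ('m \<Rightarrow> 'm \<Rightarrow> 'a) \<Rightarrow> bool" where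
  "hilbert_left_module scM act inn \<longleftrightarrow>
     \<comment> \<open>complex vector space\<close>
     (\<forall>c x y. scM c (x + y) = scM c x + scM c y) \<and>
     (\<forall>c d x. scM (c + d) x = scM c x + scM d x) \<and>
     (\<forall>c d x. scM c (scM d x) = scM (c * d) x) \<and>
     (\<forall>x. scM 1 x = x) \<and>
     \<comment> \<open>left A-module (compatible with scalars)\<close>
     (\<forall>a x y. act a (x + y) = act a x + act a y) \<and>
     (\<forall>a b x. act (a + b) x = act a x + act b x) \<and>
     (\<forall>a b x. act (a * b) x = act a (act b x)) \<and>
     (\<forall>c a x. act (cs_scale c a) x = scM c (act a x)) \<and>
     (\<forall>c a x. act a (scM c x) = scM c (act a x)) \<and>
     \<comment> \<open>A-valued inner product\<close>
     (\<forall>x y z. inn (x + y) z = inn x z + inn y z) \<and>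
     (\<forall>c x z. inn (scM c x) z = cs_scale c (inn x z)) \<and>
     (\<forall>a x y. inn (act a x) y = a * inn x y) \<and>
     (\<forall>x y. cs_star (inn x y) = inn y x) \<and>
     (\<forall>x. positive (inn x x)) \<and>
     (\<forall>x. inn x x = 0 \<longrightarrow> x = 0) \<and>
     \<comment> \<open>completeness for the norm sqrt(norm (inn x x))\<close>
     (\<forall>X::nat \<Rightarrow> 'm. (\<forall>e>0. \<exists>N. \<forall>m\<ge>N. \<forall>n\<ge>N. hnorm inn (X m - X n) < e) \<longrightarrow>
        (\<exists>l. \<forall>e>0. \<exists>N. \<forall>n\<ge>N. hnorm inn (X n - l) < e))"

definition A_weak_top :: "('m \<Rightarrow> 'm \<Rightarrow> 'a::cstar_unital) \<Rightarrow> 'm topology" where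
  "A_weak_top inn = topology_generated_by {{\<omega>. inn \<omega> \<eta> \<in> U} | \<eta> U. open U}"

definition mqvb ::
  "(real \<Rightarrow> real \<Rightarrow> real \<Rightarrow> real \<Rightarrow> real) \<Rightarrow> (real \<Rightarrow> real \<Rightarrow> real \<Rightarrow> real) \<Rightarrow> (real \<Rightarrow> real \<Rightarrow> real) \<Rightarrow>
   (complex \<Rightarrow> 'm::ab_group_add \<Rightarrow> 'm) \<Rightarrow> ('a::cstar_unital \<Rightarrow> 'm \<Rightarrow> 'm) \<Rightarrow> ('m \<Rightarrow> 'm \<Rightarrow> 'a) \<Rightarrow>
   ('m \<Rightarrow> ereal) \<Rightarrow> ('a \<Rightarrow> ereal) \<Rightarrow> bool" where
  "mqvb F G H scM act inn D L \<longleftrightarrow>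
     qqcms F L \<and>
     hilbert_left_module scM act inn \<and>
     \<comment> \<open>D is a norm on a dense complex subspace (extended by \<infinity>)\<close>
     (\<forall>\<omega>. 0 \<le> D \<omega>) \<and>
     0 \<in> ldom D \<and>
     (\<forall>x\<in>ldom D. \<forall>y\<in>ldom D. x + y \<in> ldom D \<and> D (x + y) \<le> D x + D y) \<and>
     (\<forall>x\<in>ldom D. \<forall>c. scM c x \<in> ldom D \<and> D (scM c x) = ereal (cmod c) * D x) \<and>
     (\<forall>x. D x = 0 \<longrightarrow> x = 0) \<and>
     UNIV \<subseteq> norm_top (hnorm inn) closure_of (ldom D) \<and>
     \<comment> \<open>(1)\<close>
     (\<forall>\<omega>. ereal (hnorm inn \<omega>) \<le> D \<omega>) \<and>
     \<comment> \<open>(2)\<close>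
     compactin (norm_top (hnorm inn)) {\<omega>. D \<omega> \<le> 1} \<and>
     \<comment> \<open>(3) (inequality asserted when both L a and D \<omega> are finite)\<close>
     (\<forall>a \<omega>. sa a \<and> a \<in> ldom L \<and> \<omega> \<in> ldom D \<longrightarrow>
        D (act a \<omega>) \<le> ereal (G (norm a) (real_of_ereal (L a)) (real_of_ereal (D \<omega>)))) \<and>
     \<comment> \<open>(4)\<close>
     (\<forall>\<omega>\<in>ldom D. \<forall>\<eta>\<in>ldom D.
        max (L (ReA (inn \<omega> \<eta>))) (L (ImA (inn \<omega> \<eta>)))
          \<le> ereal (H (real_of_ereal (D \<omega>)) (real_of_ereal (D \<eta>))))"

definition Dball :: "('m \<Rightarrow> ereal) \<Rightarrow> real \<Rightarrow> 'm set" where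
  "Dball D r = {\<omega>. D \<omega> \<le> ereal r}"

end

theory Submission
  imports Defs "HOL-Computational_Algebra.Formal_Power_Series"
begin

text \<open>
  The D-ball of radius r is compact for the module norm, being the image of the unit D-ball under
  multiplication by r. The \<open>\<AA>\<close>-weak topology is Hausdorff, because
  \<open>\<langle>\<omega> - \<omega>', \<omega> - \<omega>'\<rangle> \<noteq> 0\<close> for \<open>\<omega> \<noteq> \<omega>'\<close>, and it is coarser than the norm topology by the
  Cauchy--Schwarz inequality \<open>\<parallel>\<langle>\<omega>, \<eta>\<rangle>\<parallel> \<le> \<parallel>\<omega>\<parallel> \<parallel>\<eta>\<parallel>\<close>. The identity map from a compact space
  onto a coarser Hausdorff topology is a homeomorphism, so both topologies agree on the D-ball.

  Cauchy--Schwarz rests on the positivity of \<open>x\<^sup>* x\<close> in a C*-algebra, which is proved here from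
  the bare axioms: positivity of a self-adjoint \<open>a\<close> means that \<open>\<mu> - a\<close> is invertible for all
  \<open>\<mu> < 0\<close>, and square roots are given by the binomial series of \<open>\<surd>(1 - x)\<close>.
\<close>

section \<open>The binomial series of the square root\<close>

text \<open>The Taylor coefficients of \<open>\<surd>(1 - x)\<close>.\<close>
definition sqrt_coeff :: "nat \<Rightarrow> real" where
  "sqrt_coeff n = ((1/2) gchoose n) * (-1) ^ n"

lemma sqrt_coeff_0 [simp]: "sqrt_coeff 0 = 1"
  by (simp add: sqrt_coeff_def)

lemma sqrt_coeff_pochhammer: "sqrt_coeff n = pochhammer (-1/2) n / fact n"
proof -
  have "sqrt_coeff n = ((-1) ^ n * (-1) ^ n) * pochhammer (-1/2) n / fact n"
    unfolding sqrt_coeff_def gbinomial_pochhammer by simp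
  also have "(-1::real) ^ n * (-1) ^ n = 1"
    by (simp flip: power_mult_distrib)
  finally show ?thesis by simp
qed

lemma sqrt_coeff_Suc_nonpos: "sqrt_coeff (Suc n) \<le> 0"
proof -
  have "pochhammer (-1/2::real) (Suc n) = (-1/2) * pochhammer (1/2) n"
    by (simp add: pochhammer_rec)
  moreover have "pochhammer (1/2::real) n > 0"
    by (rule pochhammer_pos) simp
  ultimately show ?thesis
    by (simp add: sqrt_coeff_pochhammer divide_nonpos_pos)
qed

lemma sum_sqrt_coeff_nonneg: "(\<Sum>k\<le>m. sqrt_coeff k) \<ge> 0"
proof -
  have "(\<Sum>k\<le>m. sqrt_coeff k) = (-1) ^ m * ((1/2::real) - 1 gchoose m)"
    unfolding sqrt_coeff_def by (rule gbinomial_sum_lower_neg)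
  also have "\<dots> = ((-1) ^ m * (-1) ^ m) * pochhammer (1/2::real) m / fact m"
    by (simp add: gbinomial_pochhammer)
  also have "(-1::real) ^ m * (-1) ^ m = 1"
    by (simp flip: power_mult_distrib)
  finally show ?thesis
    by (simp add: pochhammer_nonneg)
qed

lemma sum_abs_sqrt_coeff_Suc_le_1: "(\<Sum>k<m. \<bar>sqrt_coeff (Suc k)\<bar>) \<le> 1"
proof -
  have "(\<Sum>k\<le>m. sqrt_coeff k) = 1 + (\<Sum>k<m. sqrt_coeff (Suc k))"
    by (simp only: lessThan_Suc_atMost[symmetric] sum.lessThan_Suc_shift sqrt_coeff_0)
  then show ?thesis
    using sum_sqrt_coeff_nonneg[of m] sqrt_coeff_Suc_nonpos by (simp add: sum_negf)
qed

lemma summable_abs_sqrt_coeff_Suc: "summable (\<lambda>n. \<bar>sqrt_coeff (Suc n)\<bar>)"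
  by (rule summableI_nonneg_bounded[of _ 1]) (auto intro: sum_abs_sqrt_coeff_Suc_le_1)

lemma suminf_abs_sqrt_coeff_Suc_le_1: "(\<Sum>n. \<bar>sqrt_coeff (Suc n)\<bar>) \<le> 1"
  using summable_abs_sqrt_coeff_Suc sum_abs_sqrt_coeff_Suc_le_1
  by (meson abs_ge_zero suminf_le_const)

lemma summable_abs_sqrt_coeff: "summable (\<lambda>n. \<bar>sqrt_coeff n\<bar>)"
  using summable_abs_sqrt_coeff_Suc summable_Suc_iff by blast

text \<open>The Cauchy square of the series is \<open>1 - x\<close>, by Vandermonde's identity.\<close>
lemma sqrt_coeff_convolution:
  "(\<Sum>i\<le>n. sqrt_coeff i * sqrt_coeff (n - i)) = (if n = 0 then 1 else if n = 1 then -1 else 0)"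
proof -
  have "(\<Sum>i\<le>n. sqrt_coeff i * sqrt_coeff (n - i))
      = (\<Sum>i\<le>n. ((1/2::real) gchoose i) * ((1/2) gchoose (n - i))) * (-1) ^ n"
    unfolding sqrt_coeff_def sum_distrib_right
    by (rule sum.cong) (auto simp: power_add[symmetric])
  also have "(\<Sum>i\<le>n. ((1/2::real) gchoose i) * ((1/2) gchoose (n - i))) = 1 gchoose n"
    using gbinomial_Vandermonde[of "1/2::real" "1/2" n] by (simp add: atLeast0AtMost)
  also have "(1::real) gchoose n = of_nat (1 choose n)"
    by (metis binomial_gbinomial of_nat_1)
  finally show ?thesis
    by (cases n; cases "n - 1") auto
qed

section \<open>Invertible elements and the Neumann series\<close>

text \<open>The library constant \<open>invertible\<close> is reserved for matrices.\<close>
definition invertible_elem :: "'a::monoid_mult \<Rightarrow> bool" where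
  "invertible_elem a \<longleftrightarrow> (\<exists>b. a * b = 1 \<and> b * a = 1)"

lemma right_inverse_eq_left_inverse:
  fixes a b c :: "'a::monoid_mult"
  shows "a * b = 1 \<Longrightarrow> c * a = 1 \<Longrightarrow> b = c"
  by (metis mult.assoc mult_1_left mult_1_right)

lemma invertible_elem_one [simp]: "invertible_elem 1"
  unfolding invertible_elem_def by auto

lemma invertible_elem_mult:
  fixes a b :: "'a::monoid_mult"
  assumes "invertible_elem a" "invertible_elem b"
  shows "invertible_elem (a * b)"
proof -
  obtain a' b' where "a * a' = 1" "a' * a = 1" "b * b' = 1" "b' * b = 1"
    using assms unfolding invertible_elem_def by blast
  moreover have "a * b * (b' * a') = a * (b * b') * a'" "b' * a' * (a * b) = b' * (a' * a) * b"
    by (simp_all add: mult.assoc)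
  ultimately have "a * b * (b' * a') = 1" "b' * a' * (a * b) = 1"
    by simp_all
  then show ?thesis
    unfolding invertible_elem_def by blast
qed

lemma invertible_elem_minus_iff [simp]:
  "invertible_elem (- a :: 'a::ring_1) \<longleftrightarrow> invertible_elem a"
proof -
  have "invertible_elem (- x)" if "invertible_elem x" for x :: 'a
    using that unfolding invertible_elem_def by (metis minus_mult_minus)
  then show ?thesis
    by (metis minus_minus)
qed

lemma invertible_elem_commuting_factor:
  fixes a b :: "'a::ring_1"
  assumes "a * b = b * a" "invertible_elem (a * b)"
  shows "invertible_elem a"
proof -
  obtain r where r: "a * b * r = 1" "r * (a * b) = 1"
    using assms(2) unfolding invertible_elem_def by blast
  have "r * (b * a) = 1"
    using r(2) assms(1) by simp
  then have "(r * b) * a = 1"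
    by (simp add: mult.assoc)
  moreover have "a * (b * r) = 1"
    using r(1) by (simp add: mult.assoc)
  ultimately have "b * r = r * b"
    by (metis right_inverse_eq_left_inverse)
  then show ?thesis
    unfolding invertible_elem_def using \<open>a * (b * r) = 1\<close> \<open>r * b * a = 1\<close> by metis
qed

lemma inverse_commute:
  fixes c e h :: "'a::monoid_mult"
  assumes "h * c = c * h" "c * e = 1" "e * c = 1"
  shows "h * e = e * h"
proof -
  have "e * h = e * h * (c * e)"
    using assms(2) by simp
  also have "\<dots> = e * (h * c) * e"
    by (simp add: mult.assoc)
  also have "\<dots> = (e * c) * h * e"
    using assms(1) by (simp add: mult.assoc)
  also have "\<dots> = h * e"
    using assms(3) by simp
  finally show ?thesis by simp
qed

lemma invertible_elem_scaleR:
  fixes x :: "'a::real_algebra_1"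
  shows "invertible_elem x \<Longrightarrow> r \<noteq> 0 \<Longrightarrow> invertible_elem (r *\<^sub>R x)"
  unfolding invertible_elem_def
  by (elim exE conjE, rule_tac x="(1/r) *\<^sub>R b" in exI) simp

lemma invertible_elem_of_real:
  "r \<noteq> 0 \<Longrightarrow> invertible_elem (of_real r :: 'a::real_algebra_1)"
  unfolding of_real_def by (rule invertible_elem_scaleR) simp_all

lemma invertible_elem_one_minus:
  fixes u :: "'a::{real_normed_algebra_1,banach}"
  assumes "norm u < 1"
  shows "invertible_elem (1 - u)"
proof -
  have "summable (\<lambda>n. norm u ^ n)"
    using assms by (simp add: summable_geometric)
  then have "summable (\<lambda>n. norm (u ^ n))"
    by (rule summable_comparison_test[rotated]) (auto intro: norm_power_ineq)
  then have s: "summable (\<lambda>n. u ^ n)"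
    by (rule summable_norm_cancel)
  have "(\<lambda>n. u ^ n - u ^ Suc n) sums (u ^ 0 - 0)"
    using telescope_sums'[OF LIMSEQ_power_zero[OF assms]] .
  then have tel: "(\<Sum>n. u ^ n - u ^ Suc n) = 1"
    using sums_unique by force
  have "(1 - u) * (\<Sum>n. u ^ n) = 1"
    using suminf_mult[OF s, of "1 - u"] tel by (simp add: algebra_simps)
  moreover have "(\<Sum>n. u ^ n) * (1 - u) = 1"
    using suminf_mult2[OF s, of "1 - u"] tel by (simp add: algebra_simps power_commutes)
  ultimately show ?thesis
    unfolding invertible_elem_def by blast
qed

lemma invertible_elem_of_real_minus:
  fixes a :: "'a::{real_normed_algebra_1,banach}"
  assumes "norm a < \<bar>\<mu>\<bar>"
  shows "invertible_elem (of_real \<mu> - a)"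
proof -
  have \<mu>: "\<mu> \<noteq> 0"
    using assms norm_ge_zero[of a] by linarith
  have "norm ((1/\<mu>) *\<^sub>R a) < 1"
    using assms \<mu> by (simp add: field_simps)
  then have "invertible_elem (\<mu> *\<^sub>R (1 - (1/\<mu>) *\<^sub>R a))"
    using \<mu> by (intro invertible_elem_scaleR invertible_elem_one_minus)
  moreover have "\<mu> *\<^sub>R (1 - (1/\<mu>) *\<^sub>R a) = of_real \<mu> - a"
    using \<mu> by (simp add: scaleR_diff_right of_real_def)
  ultimately show ?thesis by simp
qed

lemma abs_le_norm_if_not_invertible_elem:
  fixes a :: "'a::{real_normed_algebra_1,banach}"
  shows "\<not> invertible_elem (of_real \<mu> - a) \<Longrightarrow> \<bar>\<mu>\<bar> \<le> norm a"
  using invertible_elem_of_real_minus not_le by blast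

text \<open>Jacobson's lemma; if \<open>R\<close> inverts \<open>\<nu> - a b\<close>, then \<open>(1 + b R a) / \<nu>\<close> inverts \<open>\<nu> - b a\<close>.\<close>
lemma invertible_elem_of_real_minus_mult_commute:
  fixes a b :: "'a::real_algebra_1"
  assumes "\<nu> \<noteq> 0" and "invertible_elem (of_real \<nu> - a * b)"
  shows "invertible_elem (of_real \<nu> - b * a)"
proof -
  obtain R where R: "(of_real \<nu> - a * b) * R = 1" "R * (of_real \<nu> - a * b) = 1"
    using assms(2) unfolding invertible_elem_def by blast
  define Y where "Y = (1 / \<nu>) *\<^sub>R (1 + b * R * a)"
  have "(of_real \<nu> - b * a) * (b * R * a) = b * ((of_real \<nu> - a * b) * R) * a"
    by (simp add: algebra_simps of_real_def)
  then have "(of_real \<nu> - b * a) * (b * R * a) = b * a"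
    using R(1) by simp
  then have "(of_real \<nu> - b * a) * Y = 1"
    unfolding Y_def using assms(1) by (simp add: distrib_left of_real_def)
  moreover have "(b * R * a) * (of_real \<nu> - b * a) = b * (R * (of_real \<nu> - a * b)) * a"
    by (simp add: algebra_simps of_real_def)
  then have "(b * R * a) * (of_real \<nu> - b * a) = b * a"
    using R(2) by simp
  then have "Y * (of_real \<nu> - b * a) = 1"
    unfolding Y_def using assms(1) by (simp add: distrib_right of_real_def)
  ultimately show ?thesis
    unfolding invertible_elem_def by blast
qed

lemma cs_star_zero [simp]: "cs_star (0::'a::cstar_unital) = 0"
  using cs_star_add[of "0::'a" 0] by simp

lemma cs_star_minus: "cs_star (- x :: 'a::cstar_unital) = - cs_star x"
  using cs_star_add[of x "- x"] minus_unique[of "cs_star x" "cs_star (- x)"] by simp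

lemma cs_star_diff: "cs_star (x - y :: 'a::cstar_unital) = cs_star x - cs_star y"
  using cs_star_add[of x "- y"] cs_star_minus[of y] by simp

lemma cs_star_one [simp]: "cs_star (1::'a::cstar_unital) = 1"
proof -
  have "cs_star (1::'a) = cs_star 1 * cs_star (cs_star 1)"
    by (simp add: cs_star_star)
  also have "\<dots> = cs_star (cs_star 1 * 1)"
    by (simp only: cs_star_mult)
  also have "\<dots> = 1"
    by (simp add: cs_star_star)
  finally show ?thesis .
qed

lemma cs_star_scaleR: "cs_star (r *\<^sub>R x :: 'a::cstar_unital) = r *\<^sub>R cs_star x"
  by (metis cs_scale_of_real cs_star_scale complex_cnj_complex_of_real)

lemma cs_star_of_real [simp]: "cs_star (of_real r :: 'a::cstar_unital) = of_real r"
  unfolding of_real_def by (simp add: cs_star_scaleR)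

lemma cs_star_power: "cs_star (x ^ n :: 'a::cstar_unital) = cs_star x ^ n"
  by (induction n) (simp_all add: cs_star_mult power_commutes)

lemma norm_cs_star [simp]: "norm (cs_star x :: 'a::cstar_unital) = norm x"
proof -
  have le: "norm y \<le> norm (cs_star y)" for y :: 'a
  proof (cases "y = 0")
    case False
    have "(norm y)\<^sup>2 \<le> norm (cs_star y) * norm y"
      using cstar_identity[of y] norm_mult_ineq[of "cs_star y" y] by simp
    then show ?thesis
      using False by (simp add: power2_eq_square)
  qed simp
  show ?thesis
    using le[of x] le[of "cs_star x"] by (simp add: cs_star_star)
qed

lemma bounded_linear_cs_star: "bounded_linear (cs_star :: 'a::cstar_unital \<Rightarrow> 'a)"
  by (rule bounded_linear_intro[of _ 1]) (auto simp: cs_star_add cs_star_scaleR)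

lemma cs_star_suminf:
  "summable (f :: nat \<Rightarrow> 'a::cstar_unital) \<Longrightarrow> cs_star (suminf f) = (\<Sum>n. cs_star (f n))"
  using bounded_linear.suminf[OF bounded_linear_cs_star, of f] by simp

lemma norm_cs_star_mult_self: "norm (x * cs_star x :: 'a::cstar_unital) = (norm x)\<^sup>2"
  using cstar_identity[of "cs_star x"] by (simp add: cs_star_star)

lemma cs_scale_one [simp]: "cs_scale 1 (x::'a::cstar_unital) = x"
  using cs_scale_of_real[of 1 x] by simp

lemma cs_scale_zero [simp]: "cs_scale 0 (x::'a::cstar_unital) = 0"
  using cs_scale_of_real[of 0 x] by simp

lemma cs_scale_minus: "cs_scale (- c) (x::'a::cstar_unital) = - cs_scale c x"
  using cs_scale_add_left[of c "- c" x] minus_unique[of "cs_scale c x" "cs_scale (- c) x"] by simp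

lemma sa_add: "sa a \<Longrightarrow> sa b \<Longrightarrow> sa (a + b)"
  unfolding sa_def by (simp add: cs_star_add)

lemma sa_diff: "sa a \<Longrightarrow> sa b \<Longrightarrow> sa (a - b)"
  unfolding sa_def by (simp add: cs_star_diff)

lemma sa_minus: "sa a \<Longrightarrow> sa (- a)"
  unfolding sa_def by (simp add: cs_star_minus)

lemma sa_scaleR: "sa a \<Longrightarrow> sa (r *\<^sub>R a)"
  unfolding sa_def by (simp add: cs_star_scaleR)

lemma sa_one: "sa (1::'a::cstar_unital)"
  unfolding sa_def by simp

lemma sa_of_real: "sa (of_real r :: 'a::cstar_unital)"
  unfolding sa_def by simp

lemma sa_mult_commute: "sa a \<Longrightarrow> sa b \<Longrightarrow> a * b = b * a \<Longrightarrow> sa (a * b)"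
  unfolding sa_def by (simp add: cs_star_mult)

lemma sa_star_mult_self: "sa (cs_star x * x)"
  unfolding sa_def by (simp add: cs_star_mult cs_star_star)

lemma sa_inverse:
  assumes "sa c" "c * e = 1" "e * c = 1"
  shows "sa e"
proof -
  have "cs_star e * c = 1"
    using assms(1,2) unfolding sa_def by (metis cs_star_mult cs_star_one)
  then show ?thesis
    unfolding sa_def using assms(2) by (metis right_inverse_eq_left_inverse)
qed

lemma norm_mult_self_sa: "sa (h::'a::cstar_unital) \<Longrightarrow> norm (h * h) = (norm h)\<^sup>2"
  unfolding sa_def using cstar_identity[of h] by simp

lemma sa_eq_0_if_cube_eq_0:
  fixes a :: "'a::cstar_unital"
  assumes "sa a" "a * a * a = 0"
  shows "a = 0"
proof -
  have "(a * a) * (a * a) = 0"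
    using assms(2) by (metis mult.assoc mult_zero_left)
  then have "norm (a * a) = 0"
    using norm_mult_self_sa[of "a * a"] assms(1) by (simp add: sa_mult_commute)
  then show ?thesis
    using norm_mult_self_sa[OF assms(1)] by simp
qed

definition i_times :: "real \<Rightarrow> 'a::cstar_unital" where
  "i_times t = cs_scale (\<i> * complex_of_real t) 1"

lemma i_times_mult: "i_times t * x = cs_scale (\<i> * complex_of_real t) x"
  unfolding i_times_def by (simp add: cs_scale_mult_left)

lemma mult_i_times: "x * i_times t = cs_scale (\<i> * complex_of_real t) x"
  unfolding i_times_def by (simp add: cs_scale_mult_right)

lemma i_times_commute: "i_times t * x = x * i_times t"
  by (simp add: i_times_mult mult_i_times)

lemma mult_i_times_left_commute: "x * (i_times t * y) = i_times t * (x * y)"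
  by (metis i_times_commute mult.assoc)

lemma i_times_mult_i_times: "i_times s * i_times t = - of_real (s * t)"
proof -
  have "i_times s * i_times t = cs_scale (\<i> * complex_of_real s) (cs_scale (\<i> * complex_of_real t) 1)"
    by (simp only: i_times_mult) (simp add: i_times_def)
  also have "\<dots> = cs_scale (complex_of_real (- (s * t))) 1"
    by (simp add: cs_scale_scale algebra_simps)
  also have "\<dots> = - of_real (s * t)"
    by (subst cs_scale_of_real) (simp add: of_real_def)
  finally show ?thesis .
qed

lemma i_times_minus: "i_times (- t) = - i_times t"
  unfolding i_times_def by (simp add: cs_scale_minus)

lemma cs_star_i_times: "cs_star (i_times t) = - i_times t"
  unfolding i_times_def by (simp add: cs_star_scale cs_scale_minus)

lemma i_times_ImA: "i_times 1 * ImA a = (1/2) *\<^sub>R (a - cs_star a)"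
  unfolding ImA_def i_times_mult
  by (simp add: cs_scale_scale flip: cs_scale_of_real)

lemma i_times_1_mult_square: "(i_times 1 * x) * (i_times 1 * x) = - (x * x)"
proof -
  have "(i_times 1 * x) * (i_times 1 * x) = (i_times 1 * i_times 1) * (x * x)"
    by (metis mult.assoc mult_i_times_left_commute)
  then show ?thesis
    by (simp add: i_times_mult_i_times)
qed

lemma ReA_plus_i_times_ImA: "ReA a + i_times 1 * ImA a = a"
  unfolding i_times_ImA ReA_def by (simp add: algebra_simps flip: scaleR_2)

lemma ReA_minus_i_times_ImA: "ReA a - i_times 1 * ImA a = cs_star a"
  unfolding i_times_ImA ReA_def by (simp add: algebra_simps flip: scaleR_2)

lemma sa_ReA: "sa (ReA a)"
  unfolding sa_def ReA_def by (simp add: cs_star_scaleR cs_star_add cs_star_star add.commute)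

lemma sa_ImA: "sa (ImA a)"
proof -
  have "cs_star a - a = cs_scale (-1) (a - cs_star a)"
    using cs_scale_of_real[of "-1" "a - cs_star a"] by simp
  then have "cs_star (ImA a) = cs_scale (cnj (1 / (2 * \<i>)) * (-1)) (a - cs_star a)"
    unfolding ImA_def by (simp add: cs_star_scale cs_star_diff cs_star_star cs_scale_scale)
  then show ?thesis
    unfolding sa_def ImA_def by simp
qed

lemma mult_cs_star_plus_cs_star_mult:
  "y * cs_star y + cs_star y * y = 2 *\<^sub>R (ReA y * ReA y + ImA y * ImA y)"
proof -
  have "y * cs_star y + cs_star y * y
      = (ReA y + i_times 1 * ImA y) * (ReA y - i_times 1 * ImA y)
        + (ReA y - i_times 1 * ImA y) * (ReA y + i_times 1 * ImA y)"
    by (simp only: ReA_plus_i_times_ImA ReA_minus_i_times_ImA)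
  also have "\<dots> = 2 *\<^sub>R (ReA y * ReA y) - 2 *\<^sub>R ((i_times 1 * ImA y) * (i_times 1 * ImA y))"
    by (simp add: algebra_simps scaleR_2)
  also have "\<dots> = 2 *\<^sub>R (ReA y * ReA y + ImA y * ImA y)"
    unfolding i_times_1_mult_square by (simp add: scaleR_add_right)
  finally show ?thesis .
qed

text \<open>For commuting self-adjoint \<open>h, w\<close> the element \<open>z = h + i w\<close> satisfies \<open>z\<^sup>* z = h\<^sup>2 + w\<^sup>2\<close>.\<close>
lemma norm_sa_le_norm_sum_squares:
  fixes h w :: "'a::cstar_unital"
  assumes "sa h" "sa w" "h * w = w * h"
  shows "(norm h)\<^sup>2 \<le> norm (h * h + w * w)"
proof -
  define z where "z = h + i_times 1 * w"
  have star_z: "cs_star z = h - i_times 1 * w"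
    using assms(1,2) unfolding z_def sa_def
    by (simp add: cs_star_add cs_star_mult cs_star_i_times i_times_commute)
  have "h * (i_times 1 * w) = i_times 1 * (h * w)"
    by (rule mult_i_times_left_commute)
  moreover have "(i_times 1 * w) * h = i_times 1 * (w * h)"
    by (simp add: mult.assoc)
  moreover note i_times_1_mult_square[of w]
  moreover have "cs_star z * z = h * h + h * (i_times 1 * w) - (i_times 1 * w) * h
      - (i_times 1 * w) * (i_times 1 * w)"
    unfolding star_z by (simp add: z_def left_diff_distrib distrib_left)
  ultimately have "cs_star z * z = h * h + w * w"
    using assms(3) by simp
  moreover have "z + cs_star z = 2 *\<^sub>R h"
    unfolding star_z by (simp add: z_def scaleR_2)
  then have "2 * norm h \<le> norm z + norm (cs_star z)"
    by (metis norm_scaleR norm_triangle_ineq abs_numeral)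
  ultimately show ?thesis
    using cstar_identity[of z] by (simp add: power_mono)
qed

lemma invertible_elem_i_times_minus:
  fixes a :: "'a::cstar_unital"
  assumes "norm a < \<bar>t\<bar>"
  shows "invertible_elem (i_times t - a)"
proof -
  have t: "t \<noteq> 0"
    using assms norm_ge_zero[of a] by linarith
  have "norm (cs_scale (1 / (\<i> * complex_of_real t)) a) < 1"
    using assms t by (simp add: norm_cs_scale norm_mult norm_divide field_simps)
  then have "invertible_elem (1 - cs_scale (1 / (\<i> * complex_of_real t)) a)"
    by (rule invertible_elem_one_minus)
  moreover have "invertible_elem (i_times t :: 'a)"
    unfolding invertible_elem_def
    using t by (intro exI[of _ "i_times (- 1 / t)"]) (simp add: i_times_mult_i_times)
  ultimately have "invertible_elem (i_times t * (1 - cs_scale (1 / (\<i> * complex_of_real t)) a))"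
    by (simp add: invertible_elem_mult)
  moreover have "i_times t * (1 - cs_scale (1 / (\<i> * complex_of_real t)) a) = i_times t - a"
    using t by (simp add: right_diff_distrib i_times_mult cs_scale_scale flip: cs_scale_of_real)
  ultimately show ?thesis by simp
qed

text \<open>
  Otherwise \<open>\<bar>\<beta> + t\<bar> \<le> \<parallel>h + i t\<parallel>\<close> for every real \<open>t\<close>, while \<open>\<parallel>h + i t\<parallel>\<^sup>2 = \<parallel>h\<^sup>2 + t\<^sup>2\<parallel>\<close> by the
  C*-identity; this fails for \<open>t\<close> of the sign of \<open>\<beta>\<close> and large modulus.
\<close>
lemma invertible_elem_i_times_minus_sa:
  fixes h :: "'a::cstar_unital"
  assumes "sa h" "\<beta> \<noteq> 0"
  shows "invertible_elem (i_times \<beta> - h)"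
proof (rule ccontr)
  assume not_inv: "\<not> invertible_elem (i_times \<beta> - h)"
  have bound: "(\<beta> + t)\<^sup>2 \<le> (norm h)\<^sup>2 + t\<^sup>2" for t
  proof -
    have "i_times \<beta> - h = i_times (\<beta> + t) - (h + i_times t)"
      unfolding i_times_def by (simp add: cs_scale_add_left distrib_left)
    then have "\<bar>\<beta> + t\<bar> \<le> norm (h + i_times t)"
      using not_inv invertible_elem_i_times_minus not_le by metis
    then have "(\<beta> + t)\<^sup>2 \<le> (norm (h + i_times t))\<^sup>2"
      by (metis abs_ge_zero power2_abs power_mono)
    also have "(norm (h + i_times t))\<^sup>2 = norm (h * h + of_real (t * t))"
    proof -
      have "cs_star (h + i_times t) * (h + i_times t) = h * h + of_real (t * t)"
        using assms(1) unfolding sa_def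
        by (simp add: cs_star_add cs_star_i_times algebra_simps i_times_mult_i_times
            i_times_commute[of t h])
      then show ?thesis
        using cstar_identity[of "h + i_times t"] by simp
    qed
    also have "\<dots> \<le> norm (h * h) + norm (of_real (t * t) :: 'a)"
      by (rule norm_triangle_ineq)
    also have "\<dots> \<le> (norm h)\<^sup>2 + t\<^sup>2"
      using norm_mult_ineq[of h h] norm_of_real[of "t * t", where 'a='a]
      by (simp add: power2_eq_square del: of_real_mult)
    finally show ?thesis .
  qed
  define t where "t = ((norm h)\<^sup>2 + 1) / (2 * \<beta>)"
  have "2 * \<beta> * t = (norm h)\<^sup>2 + 1"
    unfolding t_def using assms(2) by simp
  moreover have "(\<beta> + t)\<^sup>2 = \<beta>\<^sup>2 + 2 * \<beta> * t + t\<^sup>2"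
    by (simp add: power2_eq_square algebra_simps)
  ultimately show False
    using bound[of t] by (smt (verit) zero_le_power2)
qed

lemma invertible_elem_sa_square_plus:
  fixes s :: "'a::cstar_unital"
  assumes "sa s" "\<beta> \<noteq> 0"
  shows "invertible_elem (s * s + of_real (\<beta> * \<beta>))"
proof -
  have "invertible_elem ((i_times \<beta> - s) * (i_times (- \<beta>) - s))"
    using assms by (simp add: invertible_elem_mult invertible_elem_i_times_minus_sa)
  moreover have "(i_times \<beta> - s) * (i_times (- \<beta>) - s) = s * s + of_real (\<beta> * \<beta>)"
    by (simp add: algebra_simps i_times_mult_i_times i_times_commute[of _ s] i_times_minus)
  ultimately show ?thesis by simp
qed

text \<open>\<open>\<surd>(1 - g)\<close> for \<open>\<parallel>g\<parallel> \<le> 1\<close>; the series converges absolutely on the closed unit ball.\<close>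
definition sqrt_one_minus :: "'a::cstar_unital \<Rightarrow> 'a" where
  "sqrt_one_minus g = (\<Sum>n. sqrt_coeff n *\<^sub>R g ^ n)"

lemma norm_sqrt_series_term_le:
  fixes g :: "'a::real_normed_algebra_1"
  assumes "norm g \<le> 1"
  shows "norm (sqrt_coeff n *\<^sub>R g ^ n) \<le> \<bar>sqrt_coeff n\<bar>"
proof -
  have "norm (g ^ n) \<le> 1"
    using norm_power_ineq[of g n] power_le_one[OF norm_ge_zero assms, of n] by linarith
  then show ?thesis
    by (simp add: mult_left_le)
qed

lemma summable_norm_sqrt_series:
  fixes g :: "'a::real_normed_algebra_1"
  shows "norm g \<le> 1 \<Longrightarrow> summable (\<lambda>n. norm (sqrt_coeff n *\<^sub>R g ^ n))"
  by (rule summable_comparison_test[OF _ summable_abs_sqrt_coeff])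
    (use norm_sqrt_series_term_le in fastforce)

lemma summable_sqrt_series:
  fixes g :: "'a::{real_normed_algebra_1,banach}"
  shows "norm g \<le> 1 \<Longrightarrow> summable (\<lambda>n. sqrt_coeff n *\<^sub>R g ^ n)"
  by (rule summable_norm_cancel, erule summable_norm_sqrt_series)

lemma sqrt_one_minus_square:
  fixes g :: "'a::cstar_unital"
  assumes "norm g \<le> 1"
  shows "sqrt_one_minus g * sqrt_one_minus g = 1 - g"
proof -
  have "sqrt_one_minus g * sqrt_one_minus g
      = (\<Sum>k. \<Sum>i\<le>k. (sqrt_coeff i *\<^sub>R g ^ i) * (sqrt_coeff (k - i) *\<^sub>R g ^ (k - i)))"
    unfolding sqrt_one_minus_def
    by (rule Cauchy_product[OF summable_norm_sqrt_series[OF assms] summable_norm_sqrt_series[OF assms]])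
  also have "\<dots> = (\<Sum>k. (\<Sum>i\<le>k. sqrt_coeff i * sqrt_coeff (k - i)) *\<^sub>R g ^ k)"
  proof (rule suminf_cong)
    fix k
    have "(\<Sum>i\<le>k. (sqrt_coeff i *\<^sub>R g ^ i) * (sqrt_coeff (k - i) *\<^sub>R g ^ (k - i)))
        = (\<Sum>i\<le>k. (sqrt_coeff i * sqrt_coeff (k - i)) *\<^sub>R g ^ k)"
      by (rule sum.cong) (auto simp: power_add[symmetric])
    then show "(\<Sum>i\<le>k. (sqrt_coeff i *\<^sub>R g ^ i) * (sqrt_coeff (k - i) *\<^sub>R g ^ (k - i)))
        = (\<Sum>i\<le>k. sqrt_coeff i * sqrt_coeff (k - i)) *\<^sub>R g ^ k"
      by (simp add: scaleR_sum_left)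
  qed
  also have "\<dots> = (\<Sum>k. (if k = 0 then 1 else if k = 1 then -1 else 0) *\<^sub>R g ^ k)"
    by (simp only: sqrt_coeff_convolution)
  also have "\<dots> = (\<Sum>k\<in>{0,1}. (if k = 0 then 1 else if k = 1 then -1 else 0) *\<^sub>R g ^ k)"
    by (rule suminf_finite) auto
  also have "\<dots> = 1 - g"
    by simp
  finally show ?thesis .
qed

lemma sa_sqrt_one_minus:
  fixes g :: "'a::cstar_unital"
  assumes "sa g" "norm g \<le> 1"
  shows "sa (sqrt_one_minus g)"
proof -
  have "cs_star (sqrt_one_minus g) = (\<Sum>n. cs_star (sqrt_coeff n *\<^sub>R g ^ n))"
    unfolding sqrt_one_minus_def by (rule cs_star_suminf[OF summable_sqrt_series[OF assms(2)]])
  also have "\<dots> = sqrt_one_minus g"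
    using assms(1) unfolding sqrt_one_minus_def sa_def by (simp only: cs_star_scaleR cs_star_power)
  finally show ?thesis
    unfolding sa_def .
qed

lemma sqrt_one_minus_commute:
  fixes a g :: "'a::cstar_unital"
  assumes "norm g \<le> 1" "a * g = g * a"
  shows "a * sqrt_one_minus g = sqrt_one_minus g * a"
proof -
  have "a * g ^ n = g ^ n * a" for n
  proof (induction n)
    case (Suc n)
    have "a * g ^ Suc n = (a * g) * g ^ n"
      by (simp add: mult.assoc)
    also have "\<dots> = g * (a * g ^ n)"
      by (simp add: assms(2) mult.assoc)
    finally show ?case
      using Suc by (simp add: mult.assoc)
  qed simp
  then have "(\<Sum>n. a * (sqrt_coeff n *\<^sub>R g ^ n)) = (\<Sum>n. (sqrt_coeff n *\<^sub>R g ^ n) * a)"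
    by simp
  then show ?thesis
    unfolding sqrt_one_minus_def
    using suminf_mult[OF summable_sqrt_series[OF assms(1)], of a]
      suminf_mult2[OF summable_sqrt_series[OF assms(1)], of a]
    by simp
qed

lemma norm_one_minus_sqrt_one_minus_le:
  fixes g :: "'a::cstar_unital"
  assumes "norm g \<le> 1"
  shows "norm (1 - sqrt_one_minus g) \<le> 1"
proof -
  have tail: "summable (\<lambda>n. norm (sqrt_coeff (Suc n) *\<^sub>R g ^ Suc n))"
    using summable_norm_sqrt_series[OF assms]
    by (subst summable_Suc_iff[where f = "\<lambda>n. norm (sqrt_coeff n *\<^sub>R g ^ n)"])
  have "(\<Sum>n. sqrt_coeff (Suc n) *\<^sub>R g ^ Suc n) = sqrt_one_minus g - 1"
    unfolding sqrt_one_minus_def using suminf_split_head[OF summable_sqrt_series[OF assms]]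
    by (simp only: sqrt_coeff_0 power_0 scaleR_one)
  then have "norm (1 - sqrt_one_minus g) = norm (\<Sum>n. sqrt_coeff (Suc n) *\<^sub>R g ^ Suc n)"
    by (simp add: norm_minus_commute)
  also have "\<dots> \<le> (\<Sum>n. norm (sqrt_coeff (Suc n) *\<^sub>R g ^ Suc n))"
    by (rule summable_norm[OF tail])
  also have "\<dots> \<le> (\<Sum>n. \<bar>sqrt_coeff (Suc n)\<bar>)"
    by (rule suminf_le[OF _ tail summable_abs_sqrt_coeff_Suc]) (rule norm_sqrt_series_term_le[OF assms])
  also have "\<dots> \<le> 1"
    by (rule suminf_abs_sqrt_coeff_Suc_le_1)
  finally show ?thesis .
qed

section \<open>Spectral positivity\<close>

lemma exists_sa_root_of_square_minus:
  fixes c e h :: "'a::cstar_unital"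
  assumes "sa c" "c * e = 1" "e * c = 1" "h * c = c * h" "0 \<le> \<delta>" "\<delta> * norm (e * e) \<le> 1"
  shows "\<exists>w. sa w \<and> h * w = w * h \<and> w * w = c * c - of_real \<delta>"
proof -
  have sa_e: "sa e"
    using sa_inverse assms(1-3) .
  have he: "h * e = e * h"
    using inverse_commute assms(4,2,3) .
  define r where "r = \<delta> *\<^sub>R (e * e)"
  have norm_r: "norm r \<le> 1"
    unfolding r_def using assms(5,6) by simp
  have sa_r: "sa r"
    unfolding r_def using sa_e by (simp add: sa_scaleR sa_mult_commute)
  have "c * (e * e) = e" "(e * e) * c = e"
    using assms(2,3) by (simp_all add: mult.assoc[symmetric]) (simp add: mult.assoc)
  then have cr: "c * r = r * c"
    unfolding r_def by simp
  have "h * (e * e) = (e * e) * h"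
    using he by (metis mult.assoc)
  then have hr: "h * r = r * h"
    unfolding r_def by simp
  define f where "f = sqrt_one_minus r"
  have ff: "f * f = 1 - r"
    unfolding f_def by (rule sqrt_one_minus_square[OF norm_r])
  have cf: "c * f = f * c" and hf: "h * f = f * h"
    unfolding f_def using sqrt_one_minus_commute[OF norm_r] cr hr by blast+
  have "sa (f * c)"
    using sa_mult_commute[OF sa_sqrt_one_minus[OF sa_r norm_r] assms(1)] cf by (simp add: f_def)
  moreover have "h * (f * c) = (f * c) * h"
    using hf assms(4) by (metis mult.assoc)
  moreover have "(f * c) * (f * c) = c * c - of_real \<delta>"
  proof -
    have "(f * c) * (f * c) = (f * f) * (c * c)"
      using cf by (metis mult.assoc)
    also have "\<dots> = c * c - \<delta> *\<^sub>R ((e * (e * c)) * c)"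
      unfolding ff r_def by (simp add: left_diff_distrib mult.assoc)
    also have "\<dots> = c * c - of_real \<delta>"
      using assms(2,3) by (simp add: of_real_def)
    finally show ?thesis .
  qed
  ultimately show ?thesis
    by blast
qed

text \<open>
  Were \<open>1 - h\<^sup>2\<close> invertible, so would be its square root \<open>c\<close>, and a slightly smaller square root
  \<open>w\<close> of \<open>c\<^sup>2 - \<delta>\<close> would give \<open>\<parallel>h\<parallel>\<^sup>2 \<le> \<parallel>h\<^sup>2 + w\<^sup>2\<parallel> = 1 - \<delta>\<close>.
\<close>
lemma not_invertible_elem_one_minus_square:
  fixes h :: "'a::cstar_unital"
  assumes "sa h" "norm h = 1"
  shows "\<not> invertible_elem (1 - h * h)"
proof
  assume inv: "invertible_elem (1 - h * h)"
  have norm_hh: "norm (h * h) \<le> 1"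
    using norm_mult_self_sa[OF assms(1)] assms(2) by simp
  define c where "c = sqrt_one_minus (h * h)"
  have cc: "c * c = 1 - h * h"
    unfolding c_def by (rule sqrt_one_minus_square[OF norm_hh])
  have sa_c: "sa c"
    unfolding c_def by (rule sa_sqrt_one_minus[OF sa_mult_commute[OF assms(1) assms(1) refl] norm_hh])
  have hc: "h * c = c * h"
    unfolding c_def by (rule sqrt_one_minus_commute[OF norm_hh]) (simp add: mult.assoc)
  have "invertible_elem c"
    using invertible_elem_commuting_factor[of c c] inv cc by simp
  then obtain e where e: "c * e = 1" "e * c = 1"
    unfolding invertible_elem_def by blast
  define \<delta> where "\<delta> = 1 / (norm (e * e) + 1)"
  have "0 < norm (e * e) + 1"
    by (simp add: add_nonneg_pos)
  then have \<delta>: "0 < \<delta>" "\<delta> \<le> 1" "\<delta> * norm (e * e) \<le> 1"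
    unfolding \<delta>_def by (simp_all add: field_simps)
  obtain w where w: "sa w" "h * w = w * h" "w * w = c * c - of_real \<delta>"
    using exists_sa_root_of_square_minus[OF sa_c e hc less_imp_le[OF \<delta>(1)] \<delta>(3)] by blast
  have "1 \<le> norm (h * h + w * w)"
    using norm_sa_le_norm_sum_squares[OF assms(1) w(1,2)] assms(2) by simp
  also have "h * h + w * w = of_real (1 - \<delta>)"
    using w(3) cc by simp
  finally show False
    using \<delta> by (simp del: of_real_diff)
qed

lemma exists_spectral_value_abs_eq_norm:
  fixes h :: "'a::cstar_unital"
  assumes "sa h" "h \<noteq> 0"
  shows "\<exists>\<sigma>. \<bar>\<sigma>\<bar> = norm h \<and> \<not> invertible_elem (of_real \<sigma> - h)"
proof (rule ccontr)
  assume "\<not> ?thesis"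
  then have inv: "invertible_elem (of_real (norm h) - h)" "invertible_elem (of_real (- norm h) - h)"
    by (metis abs_minus_cancel abs_norm_cancel)+
  define n where "n = norm h"
  define h' where "h' = (1 / n) *\<^sub>R h"
  have n: "n > 0"
    unfolding n_def using assms(2) by simp
  have "1 - h' = (1 / n) *\<^sub>R (of_real n - h)" "1 + h' = (- 1 / n) *\<^sub>R (of_real (- n) - h)"
    unfolding h'_def using n by (simp_all add: scaleR_diff_right of_real_def)
  then have "invertible_elem ((1 - h') * (1 + h'))"
    using inv n by (simp add: invertible_elem_mult invertible_elem_scaleR n_def)
  moreover have "(1 - h') * (1 + h') = 1 - h' * h'"
    by (simp add: algebra_simps)
  moreover have "norm h' = 1"
    unfolding h'_def n_def using assms(2) by simp
  ultimately show False
    using not_invertible_elem_one_minus_square[OF sa_scaleR[OF assms(1)]] unfolding h'_def by metis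
qed

definition spectrally_positive :: "'a::cstar_unital \<Rightarrow> bool" where
  "spectrally_positive a \<longleftrightarrow> sa a \<and> (\<forall>\<mu>::real. \<mu> < 0 \<longrightarrow> invertible_elem (of_real \<mu> - a))"

lemma spectrally_positive_sa: "spectrally_positive a \<Longrightarrow> sa a"
  unfolding spectrally_positive_def by simp

lemma spectrally_positive_invertible_elem:
  "spectrally_positive a \<Longrightarrow> \<mu> < 0 \<Longrightarrow> invertible_elem (of_real \<mu> - a)"
  unfolding spectrally_positive_def by simp

lemma spectrally_positive_spectrum_nonneg:
  "spectrally_positive a \<Longrightarrow> \<not> invertible_elem (of_real \<mu> - a) \<Longrightarrow> \<mu> \<ge> 0"
  using spectrally_positive_invertible_elem not_le by blast

lemma spectrally_positive_if_norm_of_real_minus_le: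
  fixes a :: "'a::cstar_unital"
  assumes "sa a" "norm (of_real t - a) \<le> t"
  shows "spectrally_positive a"
  unfolding spectrally_positive_def
proof (intro conjI allI impI)
  fix \<mu> :: real
  assume "\<mu> < 0"
  then have "invertible_elem (of_real (t - \<mu>) - (of_real t - a))"
    using assms(2) by (intro invertible_elem_of_real_minus) auto
  moreover have "of_real (t - \<mu>) - (of_real t - a) = - (of_real \<mu> - a)"
    by simp
  ultimately show "invertible_elem (of_real \<mu> - a)"
    by (metis invertible_elem_minus_iff)
qed fact

lemma spectrally_positive_norm_minus:
  "sa a \<Longrightarrow> spectrally_positive (of_real (norm a) - a)"
  by (rule spectrally_positive_if_norm_of_real_minus_le[of _ "norm a"]) (simp_all add: sa_diff sa_of_real)

lemma norm_of_real_norm_minus_le: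
  fixes a :: "'a::cstar_unital"
  assumes "spectrally_positive a"
  shows "norm (of_real (norm a) - a) \<le> norm a"
proof (cases "of_real (norm a) - a = (0::'a)")
  case False
  define g where "g = of_real (norm a) - a"
  have "sa g"
    unfolding g_def using spectrally_positive_sa[OF assms] by (simp add: sa_diff sa_of_real)
  then obtain \<sigma> where \<sigma>: "\<bar>\<sigma>\<bar> = norm g" "\<not> invertible_elem (of_real \<sigma> - g)"
    using exists_spectral_value_abs_eq_norm False unfolding g_def by blast
  have "of_real \<sigma> - g = - (of_real (norm a - \<sigma>) - a)"
    unfolding g_def by simp
  then have "\<not> invertible_elem (of_real (norm a - \<sigma>) - a)"
    using \<sigma>(2) by (metis invertible_elem_minus_iff)
  then have "0 \<le> norm a - \<sigma>" "\<bar>norm a - \<sigma>\<bar> \<le> norm a"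
    by (rule spectrally_positive_spectrum_nonneg[OF assms], rule abs_le_norm_if_not_invertible_elem)
  then show ?thesis
    using \<sigma>(1) unfolding g_def by auto
qed simp

lemma spectrally_positive_add:
  fixes a b :: "'a::cstar_unital"
  assumes "spectrally_positive a" "spectrally_positive b"
  shows "spectrally_positive (a + b)"
proof (rule spectrally_positive_if_norm_of_real_minus_le)
  show "sa (a + b)"
    using assms by (simp add: spectrally_positive_sa sa_add)
  have "of_real (norm a + norm b) - (a + b) = (of_real (norm a) - a) + (of_real (norm b) - b)"
    by simp
  then have "norm (of_real (norm a + norm b) - (a + b))
      \<le> norm (of_real (norm a) - a) + norm (of_real (norm b) - b)"
    by (metis norm_triangle_ineq)
  also have "\<dots> \<le> norm a + norm b"
    using norm_of_real_norm_minus_le[OF assms(1)] norm_of_real_norm_minus_le[OF assms(2)] by simp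
  finally show "norm (of_real (norm a + norm b) - (a + b)) \<le> norm a + norm b" .
qed

lemma spectrally_positive_scaleR:
  fixes a :: "'a::cstar_unital"
  assumes "spectrally_positive a" "r \<ge> 0"
  shows "spectrally_positive (r *\<^sub>R a)"
  unfolding spectrally_positive_def
proof (intro conjI allI impI)
  show "sa (r *\<^sub>R a)"
    using assms by (simp add: spectrally_positive_sa sa_scaleR)
  fix \<mu> :: real
  assume \<mu>: "\<mu> < 0"
  show "invertible_elem (of_real \<mu> - r *\<^sub>R a)"
  proof (cases "r = 0")
    case True
    then show ?thesis
      using \<mu> by (simp add: invertible_elem_of_real)
  next
    case False
    then have "invertible_elem (r *\<^sub>R (of_real (\<mu> / r) - a))"
      using spectrally_positive_invertible_elem[OF assms(1)] \<mu> assms(2)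
      by (simp add: invertible_elem_scaleR divide_neg_pos)
    moreover have "r *\<^sub>R (of_real (\<mu> / r) - a) = of_real \<mu> - r *\<^sub>R a"
      using False by (simp add: scaleR_diff_right of_real_def)
    ultimately show ?thesis
      by simp
  qed
qed

lemma spectrally_positive_antisym:
  fixes a :: "'a::cstar_unital"
  assumes "spectrally_positive a" "spectrally_positive (- a)"
  shows "a = 0"
proof (rule ccontr)
  assume "a \<noteq> 0"
  then obtain \<sigma> where \<sigma>: "\<bar>\<sigma>\<bar> = norm a" "\<not> invertible_elem (of_real \<sigma> - a)"
    using exists_spectral_value_abs_eq_norm[OF spectrally_positive_sa[OF assms(1)]] by blast
  have "\<sigma> > 0"
    using spectrally_positive_spectrum_nonneg[OF assms(1) \<sigma>(2)] \<sigma>(1) \<open>a \<noteq> 0\<close> by auto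
  then have "invertible_elem (of_real (- \<sigma>) - (- a))"
    by (intro spectrally_positive_invertible_elem[OF assms(2)]) simp
  moreover have "of_real (- \<sigma>) - (- a) = - (of_real \<sigma> - a)"
    by simp
  ultimately show False
    using \<sigma>(2) by (metis invertible_elem_minus_iff)
qed

lemma norm_le_norm_add_spectrally_positive:
  fixes a b :: "'a::cstar_unital"
  assumes "spectrally_positive a" "spectrally_positive b"
  shows "norm a \<le> norm (a + b)"
proof (cases "a = 0")
  case False
  define t where "t = norm (a + b)"
  have "spectrally_positive ((of_real t - (a + b)) + b)"
    unfolding t_def using assms
    by (intro spectrally_positive_add spectrally_positive_norm_minus)
      (simp_all add: spectrally_positive_sa sa_add)
  then have pos: "spectrally_positive (of_real t - a)"
    by simp
  obtain \<sigma> where \<sigma>: "\<bar>\<sigma>\<bar> = norm a" "\<not> invertible_elem (of_real \<sigma> - a)"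
    using exists_spectral_value_abs_eq_norm[OF spectrally_positive_sa[OF assms(1)] False] by blast
  have "\<sigma> = norm a"
    using spectrally_positive_spectrum_nonneg[OF assms(1) \<sigma>(2)] \<sigma>(1) by simp
  have "of_real (t - \<sigma>) - (of_real t - a) = - (of_real \<sigma> - a)"
    by simp
  then have "\<not> invertible_elem (of_real (t - \<sigma>) - (of_real t - a))"
    using \<sigma>(2) by (metis invertible_elem_minus_iff)
  then have "0 \<le> t - \<sigma>"
    by (rule spectrally_positive_spectrum_nonneg[OF pos])
  then show ?thesis
    using \<open>\<sigma> = norm a\<close> unfolding t_def by simp
qed simp

lemma norm_one_minus_le_if_spectrally_positive:
  fixes k :: "'a::cstar_unital"
  assumes "spectrally_positive k" "norm k \<le> 1"
  shows "norm (1 - k) \<le> 1"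
proof -
  have "norm (1 - k) \<le> norm (of_real (1 - norm k) :: 'a) + norm (of_real (norm k) - k)"
    using norm_triangle_ineq[of "of_real (1 - norm k) :: 'a" "of_real (norm k) - k"] by simp
  also have "\<dots> \<le> (1 - norm k) + norm k"
    using norm_of_real_norm_minus_le[OF assms(1)] assms(2) by (simp del: of_real_diff)
  finally show ?thesis
    by simp
qed

lemma spectrally_positive_square: "sa (s::'a::cstar_unital) \<Longrightarrow> spectrally_positive (s * s)"
  unfolding spectrally_positive_def
proof (intro conjI allI impI)
  assume s: "sa s"
  then show "sa (s * s)"
    by (simp add: sa_mult_commute)
  fix \<mu> :: real
  assume "\<mu> < 0"
  then have "invertible_elem (s * s + of_real (sqrt (- \<mu>) * sqrt (- \<mu>)))"
    by (intro invertible_elem_sa_square_plus s) simp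
  moreover have "s * s + of_real (sqrt (- \<mu>) * sqrt (- \<mu>)) = - (of_real \<mu> - s * s)"
    using \<open>\<mu> < 0\<close> by (simp flip: of_real_mult)
  ultimately show "invertible_elem (of_real \<mu> - s * s)"
    by (metis invertible_elem_minus_iff)
qed

text \<open>For \<open>\<mu> = - c\<^sup>3 < 0\<close> one has \<open>\<mu> - a\<^sup>3 = - (c + a) ((a - c/2)\<^sup>2 + 3 c\<^sup>2 / 4)\<close>.\<close>
lemma spectrally_positive_cube:
  fixes a :: "'a::cstar_unital"
  assumes pos: "spectrally_positive a"
  shows "spectrally_positive (a * a * a)"
  unfolding spectrally_positive_def
proof (intro conjI allI impI)
  have sa_a: "sa a"
    using pos by (rule spectrally_positive_sa)
  then show "sa (a * a * a)"
    by (simp add: sa_mult_commute mult.assoc)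
  fix \<mu> :: real
  assume \<mu>: "\<mu> < 0"
  define c where "c = root 3 (- \<mu>)"
  have c: "c > 0" "c * c * c = - \<mu>"
    unfolding c_def using \<mu> odd_real_root_pow[of 3 "- \<mu>"] by (simp_all add: power3_eq_cube)
  define s where "s = a - of_real (c / 2)"
  define \<beta> where "\<beta> = sqrt 3 * c / 2"
  have "invertible_elem (of_real (- c) - a)"
    using c by (intro spectrally_positive_invertible_elem[OF pos]) simp
  moreover have "invertible_elem (s * s + of_real (\<beta> * \<beta>))"
    unfolding s_def \<beta>_def using sa_a c by (intro invertible_elem_sa_square_plus sa_diff sa_of_real) auto
  ultimately have "invertible_elem ((of_real (- c) - a) * (s * s + of_real (\<beta> * \<beta>)))"
    by (rule invertible_elem_mult)
  moreover have "(of_real (- c) - a) * (s * s + of_real (\<beta> * \<beta>)) = of_real \<mu> - a * a * a"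
  proof -
    have "s * s = a * a - ((c/2) *\<^sub>R a + (c/2) *\<^sub>R a) + (c / 2 * (c / 2)) *\<^sub>R 1"
      unfolding s_def by (simp add: algebra_simps of_real_def)
    also have "(c/2) *\<^sub>R a + (c/2) *\<^sub>R a = c *\<^sub>R a"
      by (metis scaleR_add_left field_sum_of_halves)
    finally have "s * s + of_real (\<beta> * \<beta>) = a * a - c *\<^sub>R a + ((c * c / 4) + \<beta> * \<beta>) *\<^sub>R 1"
      by (simp add: of_real_def scaleR_add_left)
    also have "(c * c / 4) + \<beta> * \<beta> = c * c"
      unfolding \<beta>_def by (simp add: algebra_simps)
    finally have sq: "s * s + of_real (\<beta> * \<beta>) = a * a - c *\<^sub>R a + (c * c) *\<^sub>R 1" .
    have "(of_real (- c) - a) * (s * s + of_real (\<beta> * \<beta>))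
        = - ((c *\<^sub>R 1 + a) * (a * a - c *\<^sub>R a + (c * c) *\<^sub>R 1))"
      unfolding sq by (simp add: of_real_def algebra_simps)
    also have "(c *\<^sub>R 1 + a) * (a * a - c *\<^sub>R a + (c * c) *\<^sub>R 1) = (c * c * c) *\<^sub>R 1 + a * a * a"
      by (simp add: algebra_simps)
    finally show ?thesis
      using c(2) by (simp add: of_real_def)
  qed
  ultimately show "invertible_elem (of_real \<mu> - a * a * a)"
    by simp
qed

text \<open>Since \<open>(p - h) (p + h) = 0\<close>, one has \<open>(\<mu> - (p - h)) (\<mu> - (p + h)) = \<mu> (\<mu> - 2 p)\<close>.\<close>
lemma spectrally_positive_minus_root:
  fixes p h :: "'a::cstar_unital"
  assumes pos: "spectrally_positive p" and "sa h" "p * p = h * h" "p * h = h * p"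
  shows "spectrally_positive (p - h)"
  unfolding spectrally_positive_def
proof (intro conjI allI impI)
  show "sa (p - h)"
    using spectrally_positive_sa[OF pos] assms(2) by (rule sa_diff)
  fix \<mu> :: real
  assume \<mu>: "\<mu> < 0"
  have "invertible_elem (of_real \<mu> * (of_real \<mu> - 2 *\<^sub>R p))"
    using \<mu> spectrally_positive_scaleR[OF pos, of 2]
    by (intro invertible_elem_mult invertible_elem_of_real spectrally_positive_invertible_elem) auto
  moreover have "of_real \<mu> * (of_real \<mu> - 2 *\<^sub>R p) = (of_real \<mu> - (p + h)) * (of_real \<mu> - (p - h))"
    "(of_real \<mu> - (p + h)) * (of_real \<mu> - (p - h)) = (of_real \<mu> - (p - h)) * (of_real \<mu> - (p + h))"
    using assms(3,4) by (simp_all add: of_real_def algebra_simps scaleR_2)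
  ultimately show "invertible_elem (of_real \<mu> - (p - h))"
    using invertible_elem_commuting_factor[of "of_real \<mu> - (p - h)" "of_real \<mu> - (p + h)"] by metis
qed

lemma exists_spectrally_positive_root_of_square:
  fixes h :: "'a::cstar_unital"
  assumes "sa h"
  shows "\<exists>p. spectrally_positive p \<and> p * p = h * h \<and> p * h = h * p"
proof -
  define T where "T = (norm h)\<^sup>2 + 1"
  have T: "T > 0"
    unfolding T_def by (simp add: add_nonneg_pos)
  define k where "k = (1 / T) *\<^sub>R (h * h)"
  have "spectrally_positive k"
    unfolding k_def using T by (intro spectrally_positive_scaleR spectrally_positive_square assms) simp
  moreover have "norm k \<le> 1"
    unfolding k_def using norm_mult_self_sa[OF assms] T by (simp add: T_def)
  ultimately have norm_1k: "norm (1 - k) \<le> 1"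
    by (rule norm_one_minus_le_if_spectrally_positive)
  define c where "c = sqrt_one_minus (1 - k)"
  have cc: "c * c = k"
    unfolding c_def using sqrt_one_minus_square[OF norm_1k] by simp
  have "spectrally_positive c"
    using norm_one_minus_sqrt_one_minus_le[OF norm_1k] sa_sqrt_one_minus[OF _ norm_1k]
      spectrally_positive_sa[OF \<open>spectrally_positive k\<close>]
    unfolding c_def
    by (intro spectrally_positive_if_norm_of_real_minus_le[of _ 1]) (simp_all add: sa_diff sa_one)
  moreover have "h * c = c * h"
    unfolding c_def k_def by (rule sqrt_one_minus_commute[OF norm_1k[unfolded k_def]])
      (simp add: algebra_simps mult.assoc)
  moreover have "(sqrt T *\<^sub>R c) * (sqrt T *\<^sub>R c) = h * h"
    using T by (simp add: cc k_def)
  ultimately show ?thesis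
    using T by (intro exI[of _ "sqrt T *\<^sub>R c"]) (simp add: spectrally_positive_scaleR)
qed

lemma eq_0_if_spectrally_positive_minus_star_mult_self:
  fixes y :: "'a::cstar_unital"
  assumes pos: "spectrally_positive (- (cs_star y * y))"
  shows "y = 0"
proof -
  have "spectrally_positive (- (y * cs_star y))"
    unfolding spectrally_positive_def
  proof (intro conjI allI impI)
    show "sa (- (y * cs_star y))"
      using sa_minus sa_star_mult_self[of "cs_star y"] by (simp add: cs_star_star)
    fix \<mu> :: real
    assume "\<mu> < 0"
    have "of_real \<mu> - - (cs_star y * y) = - (of_real (- \<mu>) - cs_star y * y)"
      by simp
    then have "invertible_elem (of_real (- \<mu>) - cs_star y * y)"
      using spectrally_positive_invertible_elem[OF pos \<open>\<mu> < 0\<close>] by (metis invertible_elem_minus_iff)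
    then have "invertible_elem (of_real (- \<mu>) - y * cs_star y)"
      by (rule invertible_elem_of_real_minus_mult_commute[rotated]) (use \<open>\<mu> < 0\<close> in simp)
    moreover have "of_real \<mu> - - (y * cs_star y) = - (of_real (- \<mu>) - y * cs_star y)"
      by simp
    ultimately show "invertible_elem (of_real \<mu> - - (y * cs_star y))"
      by (metis invertible_elem_minus_iff)
  qed
  moreover have "spectrally_positive (y * cs_star y)"
  proof -
    have "y * cs_star y = 2 *\<^sub>R (ReA y * ReA y + ImA y * ImA y) + - (cs_star y * y)"
      using mult_cs_star_plus_cs_star_mult[of y] by (simp add: algebra_simps)
    then show ?thesis
      using pos by (simp only:)
        (intro spectrally_positive_add spectrally_positive_scaleR spectrally_positive_square
          sa_ReA sa_ImA; simp)
  qed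
  ultimately have "y * cs_star y = 0"
    using spectrally_positive_antisym by blast
  then show ?thesis
    using norm_cs_star_mult_self[of y] by simp
qed

text \<open>
  With \<open>h = x\<^sup>* x\<close> and \<open>p\<close> the positive square root of \<open>h\<^sup>2\<close>, the element \<open>m = p - h\<close> is
  positive with \<open>m (p + h) = 0\<close>, so \<open>(x m)\<^sup>* (x m) = m h m = - m\<^sup>3 / 2\<close> forces \<open>x m = 0\<close>,
  hence \<open>m = 0\<close>.
\<close>
lemma spectrally_positive_star_mult_self:
  fixes x :: "'a::cstar_unital"
  shows "spectrally_positive (cs_star x * x)"
proof -
  define h where "h = cs_star x * x"
  have sa_h: "sa h"
    unfolding h_def by (rule sa_star_mult_self)
  obtain p where p: "spectrally_positive p" "p * p = h * h" "p * h = h * p"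
    using exists_spectrally_positive_root_of_square[OF sa_h] by blast
  define m where "m = p - h"
  have pos_m: "spectrally_positive m"
    unfolding m_def by (rule spectrally_positive_minus_root[OF p(1) sa_h p(2,3)])
  have "m * (p + h) = 0"
    unfolding m_def using p(2,3) by (simp add: algebra_simps)
  have "h = (1/2) *\<^sub>R ((p + h) - m)"
    unfolding m_def by (simp flip: scaleR_2)
  then have "m * h * m = m * ((1/2) *\<^sub>R ((p + h) - m)) * m"
    by (rule arg_cong[where f = "\<lambda>z. m * z * m"])
  also have "\<dots> = (1/2) *\<^sub>R (m * (p + h) * m - m * m * m)"
    by (simp add: right_diff_distrib left_diff_distrib)
  finally have mhm: "m * h * m = - ((1/2) *\<^sub>R (m * m * m))"
    using \<open>m * (p + h) = 0\<close> by simp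
  have "cs_star (x * m) * (x * m) = m * h * m"
    using spectrally_positive_sa[OF pos_m] unfolding h_def sa_def by (simp add: cs_star_mult mult.assoc)
  then have "spectrally_positive (- (cs_star (x * m) * (x * m)))"
    unfolding mhm by (simp add: spectrally_positive_scaleR spectrally_positive_cube[OF pos_m])
  then have "x * m = 0"
    by (rule eq_0_if_spectrally_positive_minus_star_mult_self)
  then have "m * m * m = 0"
    using mhm \<open>cs_star (x * m) * (x * m) = m * h * m\<close> by simp
  then have "m = 0"
    by (rule sa_eq_0_if_cube_eq_0[OF spectrally_positive_sa[OF pos_m]])
  then show ?thesis
    using p(1) unfolding m_def h_def by simp
qed

lemma spectrally_positive_if_positive: "positive a \<Longrightarrow> spectrally_positive a"
  unfolding positive_def using spectrally_positive_star_mult_self by blast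

section \<open>The Cauchy--Schwarz inequality in Hilbert modules\<close>

context
  fixes scM :: "complex \<Rightarrow> 'm::ab_group_add \<Rightarrow> 'm"
    and act :: "'a::cstar_unital \<Rightarrow> 'm \<Rightarrow> 'm"
    and inn :: "'m \<Rightarrow> 'm \<Rightarrow> 'a"
  assumes hm: "hilbert_left_module scM act inn"
begin

lemma inn_add_left: "inn (x + y) z = inn x z + inn y z"
  using hm unfolding hilbert_left_module_def by (elim conjE) metis

lemma inn_scM_left: "inn (scM c x) z = cs_scale c (inn x z)"
  using hm unfolding hilbert_left_module_def by (elim conjE) metis

lemma inn_act_left: "inn (act b x) y = b * inn x y"
  using hm unfolding hilbert_left_module_def by (elim conjE) metis

lemma cs_star_inn: "cs_star (inn x y) = inn y x"
  using hm unfolding hilbert_left_module_def by (elim conjE) metis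

lemma positive_inn_self: "positive (inn x x)"
  using hm unfolding hilbert_left_module_def by (elim conjE) metis

lemma inn_self_eq_0D: "inn x x = 0 \<Longrightarrow> x = 0"
  using hm unfolding hilbert_left_module_def by (elim conjE) metis

lemma scM_add: "scM c (x + y) = scM c x + scM c y"
  using hm unfolding hilbert_left_module_def by (elim conjE) metis

lemma scM_scM: "scM c (scM d x) = scM (c * d) x"
  using hm unfolding hilbert_left_module_def by (elim conjE) metis

lemma scM_one: "scM 1 x = x"
  using hm unfolding hilbert_left_module_def by (elim conjE) metis

lemma scM_zero: "scM 0 x = 0"
proof -
  have "scM (0 + 0) x = scM 0 x + scM 0 x"
    using hm unfolding hilbert_left_module_def by (elim conjE) metis
  then show ?thesis
    by simp
qed

lemma scM_diff: "scM c (x - y) = scM c x - scM c y"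
  using scM_add[of c "x - y" y] by (simp add: algebra_simps)

lemma inn_diff_left: "inn (x - y) z = inn x z - inn y z"
  using inn_add_left[of "x - y" y z] by (simp add: algebra_simps)

lemma inn_diff_right: "inn x (y - z) = inn x y - inn x z"
  by (metis cs_star_inn inn_diff_left cs_star_diff)

lemma inn_act_right: "inn x (act b y) = inn x y * cs_star b"
  by (metis cs_star_inn inn_act_left cs_star_mult)

lemma inn_zero_right: "inn x 0 = 0"
  using inn_diff_right[of x 0 0] by simp

lemma spectrally_positive_inn_self: "spectrally_positive (inn x x)"
  using positive_inn_self by (rule spectrally_positive_if_positive)

lemma hnorm_scM: "hnorm inn (scM c x) = cmod c * hnorm inn x"
proof -
  have "inn x (scM c x) = cs_scale (cnj c) (inn x x)"
    by (metis cs_star_inn inn_scM_left cs_star_scale)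
  then have "inn (scM c x) (scM c x) = cs_scale (c * cnj c) (inn x x)"
    by (simp add: inn_scM_left cs_scale_scale)
  then have "norm (inn (scM c x) (scM c x)) = (cmod c)\<^sup>2 * norm (inn x x)"
    by (simp add: norm_cs_scale norm_mult power2_eq_square)
  then show ?thesis
    unfolding hnorm_def by (simp add: real_sqrt_mult)
qed

text \<open>
  With \<open>a = \<langle>z, \<eta>\<rangle>\<close>, \<open>E = \<langle>\<eta>, \<eta>\<rangle>\<close>, \<open>t = 1 / \<parallel>E\<parallel>\<close> and \<open>v = t a \<eta>\<close>, expanding the positive element
  \<open>\<langle>z - v, z - v\<rangle>\<close> gives \<open>2 t a a\<^sup>* \<le> \<langle>z, z\<rangle> + t\<^sup>2 a E a\<^sup>*\<close>.
\<close>
lemma norm_inn_squared_le: "(norm (inn z \<eta>))\<^sup>2 \<le> norm (inn z z) * norm (inn \<eta> \<eta>)"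
proof (cases "inn \<eta> \<eta> = 0")
  case True
  then show ?thesis
    using inn_self_eq_0D[OF True] inn_zero_right by simp
next
  case False
  define a where "a = inn z \<eta>"
  define E where "E = inn \<eta> \<eta>"
  define t where "t = 1 / norm E"
  have t: "t > 0"
    unfolding t_def E_def using False by simp
  define v where "v = act (t *\<^sub>R a) \<eta>"
  have "inn z v = t *\<^sub>R (a * cs_star a)"
    unfolding v_def a_def by (simp add: inn_act_right cs_star_scaleR)
  moreover have "inn v z = t *\<^sub>R (a * cs_star a)"
    unfolding v_def a_def by (simp add: inn_act_left cs_star_inn)
  moreover have "inn v v = (t * t) *\<^sub>R (a * E * cs_star a)"
    unfolding v_def E_def by (simp add: inn_act_left inn_act_right cs_star_scaleR mult.assoc)
  moreover have "inn (z - v) (z - v) = inn z z - inn z v - (inn v z - inn v v)"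
    by (simp add: inn_diff_left inn_diff_right)
  ultimately have sum: "(2 * t) *\<^sub>R (a * cs_star a) + inn (z - v) (z - v)
      = inn z z + (t * t) *\<^sub>R (a * E * cs_star a)"
    by (simp add: algebra_simps flip: scaleR_2)
  have "spectrally_positive ((2 * t) *\<^sub>R (a * cs_star a))"
    using spectrally_positive_star_mult_self[of "cs_star a"] t
    by (simp add: cs_star_star spectrally_positive_scaleR)
  then have "norm ((2 * t) *\<^sub>R (a * cs_star a)) \<le> norm (inn z z + (t * t) *\<^sub>R (a * E * cs_star a))"
    unfolding sum[symmetric] by (rule norm_le_norm_add_spectrally_positive[OF _ spectrally_positive_inn_self])
  then have "2 * t * (norm a)\<^sup>2 \<le> norm (inn z z + (t * t) *\<^sub>R (a * E * cs_star a))"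
    using t by (simp add: norm_cs_star_mult_self)
  also have "\<dots> \<le> norm (inn z z) + (t * t) * (norm a * norm E * norm a)"
  proof -
    have "norm (a * E * cs_star a) \<le> norm a * norm E * norm a"
      by (metis norm_mult_ineq norm_cs_star mult_right_mono norm_ge_zero order_trans)
    then have "t * t * norm (a * E * cs_star a) \<le> t * t * (norm a * norm E * norm a)"
      by (rule mult_left_mono) simp
    then show ?thesis
      using norm_triangle_ineq[of "inn z z" "(t * t) *\<^sub>R (a * E * cs_star a)"] by simp
  qed
  also have "\<dots> = norm (inn z z) + t * (norm a)\<^sup>2"
    unfolding t_def using False by (simp add: E_def power2_eq_square field_simps)
  finally have "(norm a)\<^sup>2 \<le> norm (inn z z) / t"
    using t by (simp add: field_simps)
  then show ?thesis
    unfolding a_def t_def E_def by simp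
qed

lemma norm_inn_le_hnorm_mult: "norm (inn x y) \<le> hnorm inn x * hnorm inn y"
proof -
  have "norm (inn x y) \<le> sqrt (norm (inn x x) * norm (inn y y))"
    using real_sqrt_le_mono[OF norm_inn_squared_le[of x y]] by simp
  then show ?thesis
    unfolding hnorm_def by (simp add: real_sqrt_mult)
qed

end

section \<open>The norm topology and the \<open>\<AA>\<close>-weak topology\<close>

lemma istopology_norm_balls:
  fixes N :: "'m::ab_group_add \<Rightarrow> real"
  shows "istopology (\<lambda>U. \<forall>x\<in>U. \<exists>e>0. \<forall>y. N (y - x) < e \<longrightarrow> y \<in> U)"
  unfolding istopology_def
proof (intro conjI allI impI)
  fix S T
  assume S: "\<forall>x\<in>S. \<exists>e>0. \<forall>y. N (y - x) < e \<longrightarrow> y \<in> S"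
    and T: "\<forall>x\<in>T. \<exists>e>0. \<forall>y. N (y - x) < e \<longrightarrow> y \<in> T"
  show "\<forall>x\<in>S \<inter> T. \<exists>e>0. \<forall>y. N (y - x) < e \<longrightarrow> y \<in> S \<inter> T"
  proof
    fix x
    assume x: "x \<in> S \<inter> T"
    obtain e1 where e1: "e1 > 0" "\<forall>y. N (y - x) < e1 \<longrightarrow> y \<in> S"
      using S x by auto
    obtain e2 where e2: "e2 > 0" "\<forall>y. N (y - x) < e2 \<longrightarrow> y \<in> T"
      using T x by auto
    show "\<exists>e>0. \<forall>y. N (y - x) < e \<longrightarrow> y \<in> S \<inter> T"
      by (rule exI[of _ "min e1 e2"]) (use e1 e2 in simp)
  qed
next
  fix K
  assume K: "\<forall>S\<in>K. \<forall>x\<in>S. \<exists>e>0. \<forall>y. N (y - x) < e \<longrightarrow> y \<in> S"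
  show "\<forall>x\<in>\<Union>K. \<exists>e>0. \<forall>y. N (y - x) < e \<longrightarrow> y \<in> \<Union>K"
  proof
    fix x
    assume "x \<in> \<Union>K"
    then obtain S where "S \<in> K" "x \<in> S"
      by blast
    then obtain e where "e > 0" "\<forall>y. N (y - x) < e \<longrightarrow> y \<in> S"
      using K by blast
    then show "\<exists>e>0. \<forall>y. N (y - x) < e \<longrightarrow> y \<in> \<Union>K"
      using \<open>S \<in> K\<close> by blast
  qed
qed

lemma openin_norm_top:
  "openin (norm_top N) U \<longleftrightarrow> (\<forall>x\<in>U. \<exists>e>0. \<forall>y. N (y - x) < e \<longrightarrow> y \<in> U)"
  unfolding norm_top_def by (simp add: topology_inverse'[OF istopology_norm_balls])

lemma topspace_norm_top [simp]: "topspace (norm_top N) = UNIV"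
  using openin_subset[of "norm_top N" UNIV] by (auto simp: openin_norm_top intro: zero_less_one)

lemma continuous_map_norm_top_if_lipschitz:
  fixes f :: "'m::ab_group_add \<Rightarrow> 'm"
  assumes "\<And>x y. N (f y - f x) \<le> C * N (y - x)" "C > 0"
  shows "continuous_map (norm_top N) (norm_top N) f"
  unfolding continuous_map_def
proof (intro conjI allI impI)
  fix U
  assume "openin (norm_top N) U"
  then have U: "\<forall>x\<in>U. \<exists>e>0. \<forall>y. N (y - x) < e \<longrightarrow> y \<in> U"
    by (simp add: openin_norm_top)
  show "openin (norm_top N) {x \<in> topspace (norm_top N). f x \<in> U}"
    unfolding openin_norm_top
  proof (intro ballI)
    fix x
    assume "x \<in> {x \<in> topspace (norm_top N). f x \<in> U}"
    then obtain e where e: "e > 0" "\<forall>y. N (y - f x) < e \<longrightarrow> y \<in> U"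
      using U by auto
    have "f y \<in> U" if "N (y - x) < e / C" for y
    proof -
      have "N (f y - f x) \<le> C * N (y - x)"
        by (rule assms(1))
      also have "\<dots> < e"
        using that assms(2) by (simp add: field_simps)
      finally show ?thesis
        using e(2) by simp
    qed
    then show "\<exists>e>0. \<forall>y. N (y - x) < e \<longrightarrow> y \<in> {x \<in> topspace (norm_top N). f x \<in> U}"
      using e(1) assms(2) by (intro exI[of _ "e / C"]) simp
  qed
qed simp

lemma openin_A_weak_top_basis:
  "open V \<Longrightarrow> openin (A_weak_top inn) {\<omega>. inn \<omega> \<eta> \<in> V}"
  unfolding A_weak_top_def by (rule topology_generated_by_Basis) blast

lemma topspace_A_weak_top [simp]: "topspace (A_weak_top inn) = UNIV"
  using openin_subset[OF openin_A_weak_top_basis[OF open_UNIV, of inn undefined]] by auto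

lemma continuous_map_norm_top_A_weak_top:
  fixes inn :: "'m::ab_group_add \<Rightarrow> 'm \<Rightarrow> 'a::cstar_unital"
  assumes hm: "hilbert_left_module scM act inn"
  shows "continuous_map (norm_top (hnorm inn)) (A_weak_top inn) id"
proof -
  have basis: "openin (norm_top (hnorm inn)) {\<omega>. inn \<omega> \<eta> \<in> V}" if "open V" for \<eta> V
    unfolding openin_norm_top
  proof (intro ballI)
    fix x
    assume "x \<in> {\<omega>. inn \<omega> \<eta> \<in> V}"
    then obtain e where e: "e > 0" "\<forall>y. dist y (inn x \<eta>) < e \<longrightarrow> y \<in> V"
      using \<open>open V\<close> unfolding open_dist by auto
    define d where "d = e / (hnorm inn \<eta> + 1)"
    have hn: "hnorm inn \<eta> \<ge> 0"
      unfolding hnorm_def by simp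
    have "inn y \<eta> \<in> V" if "hnorm inn (y - x) < d" for y
    proof -
      have "dist (inn y \<eta>) (inn x \<eta>) \<le> hnorm inn (y - x) * hnorm inn \<eta>"
        using norm_inn_le_hnorm_mult[OF hm, of "y - x" \<eta>] by (simp add: dist_norm inn_diff_left[OF hm])
      also have "\<dots> \<le> d * hnorm inn \<eta>"
        using that hn by (simp add: mult_right_mono)
      also have "\<dots> < e"
        unfolding d_def using e(1) hn by (simp add: field_simps)
      finally show ?thesis
        using e(2) by simp
    qed
    then show "\<exists>e>0. \<forall>y. hnorm inn (y - x) < e \<longrightarrow> y \<in> {\<omega>. inn \<omega> \<eta> \<in> V}"
      using e(1) hn unfolding d_def by (intro exI[of _ d]) (simp add: d_def)
  qed
  have "openin (norm_top (hnorm inn)) U" if "openin (A_weak_top inn) U" for U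
    using that unfolding A_weak_top_def openin_topology_generated_by_iff
    by (rule generate_topology_on_coarsest[OF istopology_openin, rotated]) (use basis in blast)
  then show ?thesis
    unfolding continuous_map_def by simp
qed

lemma Hausdorff_space_A_weak_top:
  assumes hm: "hilbert_left_module scM act inn"
  shows "Hausdorff_space (A_weak_top inn)"
  unfolding Hausdorff_space_def
proof (intro allI impI)
  fix x y
  assume "x \<in> topspace (A_weak_top inn) \<and> y \<in> topspace (A_weak_top inn) \<and> x \<noteq> y"
  then have "inn x (x - y) \<noteq> inn y (x - y)"
    using inn_self_eq_0D[OF hm, of "x - y"] by (auto simp: inn_diff_left[OF hm])
  then obtain U V where "open U" "open V" "inn x (x - y) \<in> U" "inn y (x - y) \<in> V" "U \<inter> V = {}"
    by (metis hausdorff)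
  then show "\<exists>U V. openin (A_weak_top inn) U \<and> openin (A_weak_top inn) V \<and> x \<in> U \<and> y \<in> V \<and> disjnt U V"
    by (intro exI[of _ "{\<omega>. inn \<omega> (x - y) \<in> U}"] exI[of _ "{\<omega>. inn \<omega> (x - y) \<in> V}"]
        conjI openin_A_weak_top_basis) (auto simp: disjnt_def)
qed

lemma subtopology_eq_if_compactin_Hausdorff:
  assumes "continuous_map X Y id" "compactin X K" "Hausdorff_space Y"
  shows "subtopology Y K = subtopology X K"
proof -
  have "K \<subseteq> topspace X" "topspace X \<subseteq> topspace Y"
    using assms(1,2) compactin_subset_topspace continuous_map_image_subset_topspace by fastforce+
  then have "id ` topspace (subtopology X K) = topspace (subtopology Y K)"
    by auto
  moreover have "continuous_map (subtopology X K) (subtopology Y K) id"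
    using assms(1) by (auto simp: continuous_map_in_subtopology intro: continuous_map_from_subtopology)
  ultimately have "homeomorphic_map (subtopology X K) (subtopology Y K) id"
    using compact_space_subtopology[OF assms(2)] Hausdorff_space_subtopology[OF assms(3)]
    by (intro continuous_imp_homeomorphic_map) auto
  then show ?thesis
    by (simp add: homeomorphic_map_id)
qed

section \<open>Compactness of the D-balls\<close>

context
  fixes scM :: "complex \<Rightarrow> 'm::ab_group_add \<Rightarrow> 'm"
    and act :: "'a::cstar_unital \<Rightarrow> 'm \<Rightarrow> 'm"
    and inn :: "'m \<Rightarrow> 'm \<Rightarrow> 'a"
    and D :: "'m \<Rightarrow> ereal"
    and F :: "real \<Rightarrow> real \<Rightarrow> real \<Rightarrow> real \<Rightarrow> real"
    and G :: "real \<Rightarrow> real \<Rightarrow> real \<Rightarrow> real"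
    and H :: "real \<Rightarrow> real \<Rightarrow> real"
    and L :: "'a \<Rightarrow> ereal"
  assumes \<Omega>: "mqvb F G H scM act inn D L"
begin

lemma mqvb_hilbert_left_module: "hilbert_left_module scM act inn"
  using \<Omega> unfolding mqvb_def by (elim conjE) assumption

lemma D_nonneg: "0 \<le> D \<omega>"
proof -
  have "\<forall>\<omega>. 0 \<le> D \<omega>"
    using \<Omega> unfolding mqvb_def by (elim conjE) assumption
  then show ?thesis ..
qed

lemma D_scM: "D \<omega> \<noteq> \<infinity> \<Longrightarrow> D (scM c \<omega>) = ereal (cmod c) * D \<omega>"
proof -
  have "\<forall>x\<in>ldom D. \<forall>c. scM c x \<in> ldom D \<and> D (scM c x) = ereal (cmod c) * D x"
    using \<Omega> unfolding mqvb_def by (elim conjE) assumption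
  then show "D \<omega> \<noteq> \<infinity> \<Longrightarrow> D (scM c \<omega>) = ereal (cmod c) * D \<omega>"
    unfolding ldom_def by blast
qed

lemma Dball_0: "Dball D 0 = {0}"
proof -
  have "0 \<in> ldom D"
    using \<Omega> unfolding mqvb_def by (elim conjE) assumption
  have "\<forall>x. D x = 0 \<longrightarrow> x = 0"
    using \<Omega> unfolding mqvb_def by (elim conjE) assumption
  moreover have "D 0 = ereal (cmod 0) * D 0"
    using D_scM[of 0 0] \<open>0 \<in> ldom D\<close> scM_zero[OF mqvb_hilbert_left_module]
    unfolding ldom_def by simp
  ultimately show ?thesis
    unfolding Dball_def using D_nonneg by (auto simp: zero_ereal_def[symmetric] intro: antisym)
qed

lemma Dball_eq_image_scM:
  assumes "r > 0"
  shows "Dball D r = scM (complex_of_real r) ` Dball D 1"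
proof
  show "Dball D r \<subseteq> scM (complex_of_real r) ` Dball D 1"
  proof
    fix \<omega>
    assume "\<omega> \<in> Dball D r"
    then obtain d where d: "D \<omega> = ereal d" "d \<le> r"
      using D_nonneg[of \<omega>] unfolding Dball_def by (cases "D \<omega>") auto
    then have "D (scM (complex_of_real (1 / r)) \<omega>) \<le> 1"
      using D_scM assms by (simp add: norm_divide field_simps one_ereal_def)
    moreover have "scM (complex_of_real r) (scM (complex_of_real (1 / r)) \<omega>) = \<omega>"
      using assms by (simp add: scM_scM[OF mqvb_hilbert_left_module] scM_one[OF mqvb_hilbert_left_module]
          flip: of_real_mult)
    ultimately show "\<omega> \<in> scM (complex_of_real r) ` Dball D 1"
      unfolding Dball_def by (metis (mono_tags, lifting) image_eqI mem_Collect_eq one_ereal_def)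
  qed
  show "scM (complex_of_real r) ` Dball D 1 \<subseteq> Dball D r"
  proof
    fix \<omega>
    assume "\<omega> \<in> scM (complex_of_real r) ` Dball D 1"
    then obtain x where x: "\<omega> = scM (complex_of_real r) x" "D x \<le> 1"
      unfolding Dball_def by (auto simp: one_ereal_def)
    then obtain d where "D x = ereal d" "0 \<le> d" "d \<le> 1"
      using D_nonneg[of x] by (cases "D x") (auto simp: one_ereal_def)
    then show "\<omega> \<in> Dball D r"
      using D_scM assms unfolding Dball_def x(1) by (simp add: mult_left_le)
  qed
qed

lemma compactin_Dball:
  assumes "0 \<le> r"
  shows "compactin (norm_top (hnorm inn)) (Dball D r)"
proof (cases "r = 0")
  case True
  then show ?thesis
    by (simp add: Dball_0)
next
  case False
  then have "r > 0"
    using assms by simp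
  have "compactin (norm_top (hnorm inn)) {\<omega>. D \<omega> \<le> 1}"
    using \<Omega> unfolding mqvb_def by (elim conjE) assumption
  then have "compactin (norm_top (hnorm inn)) (Dball D 1)"
    unfolding Dball_def by (simp add: one_ereal_def)
  moreover have "continuous_map (norm_top (hnorm inn)) (norm_top (hnorm inn)) (scM (complex_of_real r))"
    using \<open>r > 0\<close>
    by (intro continuous_map_norm_top_if_lipschitz[where C = r])
      (simp_all add: scM_diff[OF mqvb_hilbert_left_module, symmetric] hnorm_scM[OF mqvb_hilbert_left_module])
  ultimately show ?thesis
    unfolding Dball_eq_image_scM[OF \<open>r > 0\<close>] by (rule image_compactin)
qed

end

theorem mainTheorem2:
  fixes F :: "real \<Rightarrow> real \<Rightarrow> real \<Rightarrow> real \<Rightarrow> real"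
    and G :: "real \<Rightarrow> real \<Rightarrow> real \<Rightarrow> real"
    and H :: "real \<Rightarrow> real \<Rightarrow> real"
    and scM :: "complex \<Rightarrow> 'm::ab_group_add \<Rightarrow> 'm"
    and act :: "'a::cstar_unital \<Rightarrow> 'm \<Rightarrow> 'm"
    and inn :: "'m \<Rightarrow> 'm \<Rightarrow> 'a"
    and D :: "'m \<Rightarrow> ereal"
    and L :: "'a \<Rightarrow> ereal"
    and r :: real
  assumes "admissible_triple F G H"
    and "mqvb F G H scM act inn D L"
    and "0 \<le> r"
  shows "subtopology (A_weak_top inn) (Dball D r) = subtopology (norm_top (hnorm inn)) (Dball D r)"
proof -
  have hm: "hilbert_left_module scM act inn"
    using mqvb_hilbert_left_module[OF assms(2)] .
  show ?thesis
    using continuous_map_norm_top_A_weak_top[OF hm] compactin_Dball[OF assms(2,3)]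
      Hausdorff_space_A_weak_top[OF hm]
    by (rule subtopology_eq_if_compactin_Hausdorff)
qed

end
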